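(* Let $\mathcal{B}$ be a $d$-dimensional manifold with a torsion-free flat connection $\nabla$ and $F\in C^\infty(\mathcal{B})$. Then $F$ satisfies the Rüssmann condition if and only if it satisfies the Resonant set with empty interior condition.
   Context: Frequency map: on a simply connected open set $\mathcal{O}$, $\varphi:\mathcal{O}\to\Omega^1_\nabla(\mathcal{O})$ sends $c$ to the parallel 1-form equal to $dF_c$ at $c$. For a parallel vector field $X$ on an open set $\mathcal{O}$, $\Omega_X=dF(X)$ and $\Sigma_X=\{c\in\mathcal{O}:\Omega_X(c)=0\}$. Rüssmann condition: for every simply connected open $\mathcal{O}\subset\mathcal{B}$ and every non-vanishing parallel vector field $X$ on $\mathcal{O}$, there is no nonempty open subset $U\subset\mathcal{O}$ with $\varphi(c)(X)=0$ for all $c\in U$ (in flat coordinates: the image of $\xi\mapsto(\partial F/\partial\xi_k)_k$ does not lie in a hyperplane through the origin on an open set). Resonant set with empty interior condition: for every open $\mathcal{O}$ and every non-vanishing parallel vector field $X$ on $\mathcal{O}$, $\Sigma_X$ has empty interior. *)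

theory Defs
  imports "HOL-Analysis.Analysis"
begin

text \<open>An affine (flat, torsion-free) structure on a manifold is encoded by an atlas of
charts (U, phi) into real^'n whose transition maps are locally affine. Tangent vectors,
covectors, parallel fields and dF are expressed in chart coordinates.\<close>

type_synonym ('a, 'n) chart = "'a set \<times> ('a \<Rightarrow> real^'n)"

definition chart_inv :: "('a, 'n) chart \<Rightarrow> real^'n \<Rightarrow> 'a" where
  "chart_inv c = inv_into (fst c) (snd c)"

definition transition :: "('a, 'n) chart \<Rightarrow> ('a, 'n) chart \<Rightarrow> real^'n \<Rightarrow> real^'n" where
  "transition c c' = snd c' \<circ> chart_inv c"

definition affine_atlas :: "('a::topological_space, 'n::finite) chart set \<Rightarrow> bool" where
  "affine_atlas A \<longleftrightarrow>
     \<Union>(fst ` A) = UNIV \<and>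
     (\<forall>c\<in>A. open (fst c) \<and> open (snd c ` fst c) \<and>
        homeomorphism (fst c) (snd c ` fst c) (snd c) (chart_inv c)) \<and>
     (\<forall>c\<in>A. \<forall>c'\<in>A. \<forall>x\<in>snd c ` (fst c \<inter> fst c'). \<exists>e>0. \<exists>L b. linear L \<and>
        (\<forall>y\<in>ball x e \<inter> snd c ` (fst c \<inter> fst c'). transition c c' y = L y + b))"

fun Ck_on :: "nat \<Rightarrow> 'b::real_normed_vector set \<Rightarrow> ('b \<Rightarrow> 'c::real_normed_vector) \<Rightarrow> bool" where
  "Ck_on 0 S f = continuous_on S f"
| "Ck_on (Suc k) S f = (f differentiable_on S \<and> continuous_on S f \<and>
      (\<forall>v. Ck_on k S (\<lambda>x. frechet_derivative f (at x) v)))"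

definition smooth_on_set :: "'b::real_normed_vector set \<Rightarrow> ('b \<Rightarrow> 'c::real_normed_vector) \<Rightarrow> bool" where
  "smooth_on_set S f \<longleftrightarrow> (\<forall>k. Ck_on k S f)"

definition smooth_fun :: "('a, 'n::finite) chart set \<Rightarrow> ('a \<Rightarrow> real) \<Rightarrow> bool" where
  "smooth_fun A F \<longleftrightarrow> (\<forall>c\<in>A. smooth_on_set (snd c ` fst c) (F \<circ> chart_inv c))"

definition dF :: "('a \<Rightarrow> real) \<Rightarrow> ('a, 'n::finite) chart \<Rightarrow> 'a \<Rightarrow> real^'n \<Rightarrow> real" where
  "dF F c p = frechet_derivative (F \<circ> chart_inv c) (at (snd c p))"

definition parallel_vf :: "('a::topological_space, 'n::finite) chart set \<Rightarrow> 'a set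
    \<Rightarrow> (('a, 'n) chart \<Rightarrow> 'a \<Rightarrow> real^'n) \<Rightarrow> bool" where
  "parallel_vf A Ob X \<longleftrightarrow>
     (\<forall>c\<in>A. \<forall>p\<in>Ob \<inter> fst c. \<exists>W. open W \<and> p \<in> W \<and> (\<forall>q\<in>W \<inter> Ob \<inter> fst c. X c q = X c p)) \<and>
     (\<forall>c\<in>A. \<forall>c'\<in>A. \<forall>p\<in>Ob \<inter> fst c \<inter> fst c'.
        X c' p = frechet_derivative (transition c c') (at (snd c p)) (X c p))"

definition nonvanishing_vf :: "('a, 'n::finite) chart set \<Rightarrow> 'a set
    \<Rightarrow> (('a, 'n) chart \<Rightarrow> 'a \<Rightarrow> real^'n) \<Rightarrow> bool" where
  "nonvanishing_vf A Ob X \<longleftrightarrow> (\<forall>c\<in>A. \<forall>p\<in>Ob \<inter> fst c. X c p \<noteq> 0)"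

text \<open>A parallel 1-form on Ob: in each chart a locally constant covector (represented via the
inner product), compatible with transitions; normalised to 0 outside its domain.\<close>
definition parallel_form :: "('a::topological_space, 'n::finite) chart set \<Rightarrow> 'a set
    \<Rightarrow> (('a, 'n) chart \<Rightarrow> 'a \<Rightarrow> real^'n) \<Rightarrow> bool" where
  "parallel_form A Ob \<omega> \<longleftrightarrow>
     (\<forall>c p. c \<notin> A \<or> p \<notin> Ob \<inter> fst c \<longrightarrow> \<omega> c p = 0) \<and>
     (\<forall>c\<in>A. \<forall>p\<in>Ob \<inter> fst c. \<exists>W. open W \<and> p \<in> W \<and> (\<forall>q\<in>W \<inter> Ob \<inter> fst c. \<omega> c q = \<omega> c p)) \<and>
     (\<forall>c\<in>A. \<forall>c'\<in>A. \<forall>p\<in>Ob \<inter> fst c \<inter> fst c'. \<forall>v.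
        \<omega> c p \<bullet> v = \<omega> c' p \<bullet> frechet_derivative (transition c c') (at (snd c p)) v)"

definition freq_map :: "('a::topological_space, 'n::finite) chart set \<Rightarrow> ('a \<Rightarrow> real) \<Rightarrow> 'a set
    \<Rightarrow> 'a \<Rightarrow> (('a, 'n) chart \<Rightarrow> 'a \<Rightarrow> real^'n)" where
  "freq_map A F Ob c = (THE \<omega>. parallel_form A Ob \<omega> \<and>
      (\<forall>k\<in>A. c \<in> fst k \<longrightarrow> (\<forall>v. \<omega> k c \<bullet> v = dF F k c v)))"

definition form_vf_zero :: "('a, 'n::finite) chart set \<Rightarrow> 'a set
    \<Rightarrow> (('a, 'n) chart \<Rightarrow> 'a \<Rightarrow> real^'n) \<Rightarrow> (('a, 'n) chart \<Rightarrow> 'a \<Rightarrow> real^'n) \<Rightarrow> bool" where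
  "form_vf_zero A Ob \<omega> X \<longleftrightarrow> (\<forall>k\<in>A. \<forall>p\<in>Ob \<inter> fst k. \<omega> k p \<bullet> X k p = 0)"

definition Omega_X :: "('a \<Rightarrow> real) \<Rightarrow> (('a, 'n::finite) chart \<Rightarrow> 'a \<Rightarrow> real^'n)
    \<Rightarrow> ('a, 'n) chart \<Rightarrow> 'a \<Rightarrow> real" where
  "Omega_X F X c p = dF F c p (X c p)"

definition Sigma_X :: "('a, 'n::finite) chart set \<Rightarrow> ('a \<Rightarrow> real) \<Rightarrow> 'a set
    \<Rightarrow> (('a, 'n) chart \<Rightarrow> 'a \<Rightarrow> real^'n) \<Rightarrow> 'a set" where
  "Sigma_X A F Ob X = {p \<in> Ob. \<forall>c\<in>A. p \<in> fst c \<longrightarrow> Omega_X F X c p = 0}"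

definition russmann :: "('a::topological_space, 'n::finite) chart set \<Rightarrow> ('a \<Rightarrow> real) \<Rightarrow> bool" where
  "russmann A F \<longleftrightarrow> (\<forall>Ob X. open Ob \<and> simply_connected Ob \<and> parallel_vf A Ob X \<and> nonvanishing_vf A Ob X
      \<longrightarrow> \<not> (\<exists>U. open U \<and> U \<noteq> {} \<and> U \<subseteq> Ob \<and> (\<forall>c\<in>U. form_vf_zero A Ob (freq_map A F Ob c) X)))"

definition resonant_empty_interior :: "('a::topological_space, 'n::finite) chart set \<Rightarrow> ('a \<Rightarrow> real) \<Rightarrow> bool" where
  "resonant_empty_interior A F \<longleftrightarrow> (\<forall>Ob X. open Ob \<and> parallel_vf A Ob X \<and> nonvanishing_vf A Ob X
      \<longrightarrow> interior (Sigma_X A F Ob X) = {})"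

end

theory Submission
  imports Defs
begin

text \<open>Because the transition maps are locally affine, their derivatives are locally constant, and a
  covector can be transported along a path by keeping its chart coordinates locally constant. The
  holonomy of this transport is invariant under homotopy, so on a simply connected open set every
  covector at a point extends uniquely to a parallel 1-form; this makes the frequency map well
  defined, the form assigned to c being dF at the point c. The pairing of a parallel 1-form with a
  parallel vector field X is locally constant. Hence an open set on which every frequency form
  annihilates X lies in the resonant set of X, and conversely a small chart ball inside the interior
  of the resonant set is a simply connected open set on which every frequency form annihilates X.\<close>

lemma linear_eq_inner_axis:
  fixes D :: "real^'n::finite \<Rightarrow> real"
  assumes "linear D"
  shows "D v = (\<chi> i. D (axis i 1)) \<bullet> v"
proof -
  have "D v = D (\<Sum>i\<in>UNIV. v $ i *s axis i 1)" by (simp add: basis_expansion)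
  also have "\<dots> = (\<Sum>i\<in>UNIV. v $ i * D (axis i 1))"
    using assms by (simp add: linear_sum linear_scale scalar_mult_eq_scaleR)
  finally show ?thesis by (simp add: inner_vec_def mult.commute)
qed

lemma continuous_on_imp_dist_in_open:
  fixes f :: "'b::metric_space \<Rightarrow> 'a::topological_space"
  assumes "continuous_on S f" "x \<in> S" "open B" "f x \<in> B"
  shows "\<exists>e>0. \<forall>y\<in>S. dist y x < e \<longrightarrow> f y \<in> B"
proof -
  obtain T where T: "open T" "x \<in> T" "\<forall>y\<in>S. y \<in> T \<longrightarrow> f y \<in> B"
    using assms unfolding continuous_on_topological by blast
  then obtain e where e: "e > 0" "ball x e \<subseteq> T" using open_contains_ball by blast
  have "f y \<in> B" if "y \<in> S" "dist y x < e" for y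
    using that e(2) T(3) by (auto simp: dist_commute)
  then show ?thesis using e(1) by blast
qed

lemma Lebesgue_number_continuous:
  fixes f :: "'b::real_normed_vector \<Rightarrow> 'a::topological_space"
  assumes S: "compact S" and f: "continuous_on S f"
    and opn: "\<And>U. U \<in> \<U> \<Longrightarrow> open U" and cov: "f ` S \<subseteq> \<Union>\<U>"
  shows "\<exists>\<delta>>0. \<forall>x\<in>S. \<exists>U\<in>\<U>. \<forall>y\<in>S. dist y x < \<delta> \<longrightarrow> f y \<in> U"
proof (cases "S = {}")
  case False
  define \<C> where "\<C> = {T. open T \<and> (\<exists>U\<in>\<U>. \<forall>y\<in>S \<inter> T. f y \<in> U)}"
  have cov\<C>: "S \<subseteq> \<Union>\<C>"
  proof
    fix x assume x: "x \<in> S"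
    then obtain U where U: "U \<in> \<U>" "f x \<in> U" using cov by blast
    then obtain T where "open T" "x \<in> T" "\<forall>y\<in>S. y \<in> T \<longrightarrow> f y \<in> U"
      using f x opn unfolding continuous_on_topological by meson
    then show "x \<in> \<Union>\<C>" using U unfolding \<C>_def by blast
  qed
  have ne: "\<C> \<noteq> {}" using cov\<C> False by blast
  have open\<C>: "\<And>B. B \<in> \<C> \<Longrightarrow> open B" unfolding \<C>_def by blast
  obtain \<delta> where \<delta>: "\<delta> > 0" "\<And>T. T \<subseteq> S \<Longrightarrow> diameter T < \<delta> \<Longrightarrow> \<exists>B\<in>\<C>. T \<subseteq> B"
    using Lebesgue_number_lemma[OF S ne cov\<C> open\<C>] by blast
  have "\<exists>U\<in>\<U>. \<forall>y\<in>S. dist y x < \<delta>/3 \<longrightarrow> f y \<in> U" if "x \<in> S" for x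
  proof -
    define T where "T = S \<inter> ball x (\<delta>/3)"
    have "diameter T \<le> 2*\<delta>/3"
    proof (rule diameter_le)
      fix y z assume "y \<in> T" "z \<in> T"
      then have "dist x y < \<delta>/3" "dist x z < \<delta>/3" unfolding T_def by auto
      then show "norm (y - z) \<le> 2*\<delta>/3"
        using dist_triangle[of y z x] by (simp add: dist_norm norm_minus_commute)
    qed (use \<delta> in simp)
    then have "diameter T < \<delta>" using \<delta>(1) by linarith
    then obtain B where "B \<in> \<C>" "T \<subseteq> B" using \<delta>(2)[of T] T_def by blast
    then obtain U where "U \<in> \<U>" "\<forall>y\<in>T. f y \<in> U" unfolding \<C>_def T_def by blast
    then show ?thesis unfolding T_def by (metis IntI dist_commute mem_ball)
  qed
  then show ?thesis using \<delta>(1) by (intro exI[of _ "\<delta>/3"]) auto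
qed (auto intro: exI[of _ 1])

lemma locally_constant_on_connected:
  assumes "connected S" "a \<in> S" "b \<in> S"
    and loc: "\<And>p. p \<in> S \<Longrightarrow> \<exists>U. open U \<and> p \<in> U \<and> (\<forall>q\<in>U \<inter> S. g q = g p)"
  shows "g a = g b"
proof -
  have "g constant_on S"
  proof (rule locally_constant_imp_constant[OF assms(1)])
    fix p assume "p \<in> S"
    then obtain U where "open U" "p \<in> U" "\<forall>q\<in>U \<inter> S. g q = g p" using loc by blast
    moreover have "openin (top_of_set S) (S \<inter> U)" using \<open>open U\<close> by (simp add: openin_open_Int)
    ultimately show "\<exists>T. openin (top_of_set S) T \<and> p \<in> T \<and> (\<forall>x\<in>T. g x = g p)"
      using \<open>p \<in> S\<close> by blast
  qed
  then show ?thesis using assms(2,3) unfolding constant_on_def by metis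
qed

lemma homotopic_loopsE:
  assumes "homotopic_loops S p q"
  obtains h where "continuous_on ({0..1::real} \<times> {0..1}) h" "h \<in> ({0..1} \<times> {0..1}) \<rightarrow> S"
    "\<forall>t\<in>{0..1}. h (0,t) = p t" "\<forall>t\<in>{0..1}. h (1,t) = q t" "\<forall>s\<in>{0..1}. h (s,1) = h (s,0)"
proof -
  obtain h where h: "continuous_on ({0..1::real} \<times> {0..1}) h" "h \<in> ({0..1} \<times> {0..1}) \<rightarrow> S"
    "\<forall>t\<in>{0..1}. h (0,t) = p t" "\<forall>t\<in>{0..1}. h (1,t) = q t"
    "\<forall>s\<in>{0..1}. pathfinish (h \<circ> Pair s) = pathstart (h \<circ> Pair s)"
    using assms unfolding homotopic_loops by (elim exE conjE) blast
  moreover have "\<forall>s\<in>{0..1}. h (s,1) = h (s,0)"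
    using h(5) by (simp add: pathstart_def pathfinish_def)
  ultimately show ?thesis using that by blast
qed

lemma simply_connected_imp_path_component:
  assumes "simply_connected S" "a \<in> S" "b \<in> S"
  shows "path_component S a b"
proof -
  have "path (\<lambda>_::real. a)" "path (\<lambda>_::real. b)" by (simp_all add: path_def)
  moreover have "path_image (\<lambda>_::real. a) \<subseteq> S" "path_image (\<lambda>_::real. b) \<subseteq> S"
    using assms(2,3) by (auto simp: path_image_def)
  ultimately have "homotopic_loops S (\<lambda>_. a) (\<lambda>_. b)"
    using assms(1) unfolding simply_connected_def by (simp add: pathstart_def pathfinish_def)
  from homotopic_loops_imp_path_component_value[OF this, of 0] show ?thesis by simp
qed

lemma locally_constant_glue:
  fixes g1 g2 :: "real \<Rightarrow> 'b"
  assumes g1: "z \<in> {a..b} \<Longrightarrow> \<exists>e>0. \<forall>z'\<in>{a..b}. dist z' z < e \<longrightarrow> g1 z' = g1 z"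
    and g2: "z \<in> {b..c} \<Longrightarrow> \<exists>e>0. \<forall>z'\<in>{b..c}. dist z' z < e \<longrightarrow> g2 z' = g2 z"
    and gb: "z = b \<Longrightarrow> g1 b = g2 b" and z: "z \<in> {a..c}"
  shows "\<exists>e>0. \<forall>z'\<in>{a..c}. dist z' z < e \<longrightarrow>
    (if z' \<le> b then g1 z' else g2 z') = (if z \<le> b then g1 z else g2 z)"
proof -
  obtain e1 where e1: "e1 > 0" "z \<le> b \<Longrightarrow> \<forall>z'\<in>{a..b}. dist z' z < e1 \<longrightarrow> g1 z' = g1 z"
    using g1 z by (cases "z \<le> b") (auto intro: zero_less_one)
  obtain e2 where e2: "e2 > 0" "b \<le> z \<Longrightarrow> \<forall>z'\<in>{b..c}. dist z' z < e2 \<longrightarrow> g2 z' = g2 z"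
    using g2 z by (cases "b \<le> z") (auto intro: zero_less_one)
  define e where "e = min (min e1 e2) (if z = b then 1 else \<bar>z - b\<bar>)"
  have "(if z' \<le> b then g1 z' else g2 z') = (if z \<le> b then g1 z else g2 z)"
    if z': "z' \<in> {a..c}" "dist z' z < e" for z'
  proof (cases "z' \<le> b")
    case True
    then have "z \<le> b" "z' \<in> {a..b}" "dist z' z < e1"
      using z' unfolding e_def by (auto simp: dist_real_def split: if_splits)
    then have "g1 z' = g1 z" using e1(2) by blast
    then show ?thesis using True \<open>z \<le> b\<close> by simp
  next
    case False
    then have "b \<le> z" "z' \<in> {b..c}" "dist z' z < e2"
      using z' unfolding e_def by (auto simp: dist_real_def split: if_splits)
    then have "g2 z' = g2 z" using e2(2) by blast
    then show ?thesis using False \<open>b \<le> z\<close> gb by (cases "z = b") simp_all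
  qed
  moreover have "e > 0" using e1(1) e2(1) unfolding e_def by simp
  ultimately show ?thesis by blast
qed

lemma segment_point_bounds:
  fixes s s' r :: real
  assumes "s \<in> {0..1}" "s' \<in> {0..1}" "r \<in> {0..1}"
  shows "s' + r * (s - s') \<in> {0..1}" and "\<bar>s' + r * (s - s') - s\<bar> \<le> \<bar>s - s'\<bar>"
proof -
  have "s' + r * (s - s') = (1 - r) * s' + r * s" by (simp add: algebra_simps)
  then show "s' + r * (s - s') \<in> {0..1}"
    using assms convex_bound_le[of s' 1 s "1 - r" r] by (auto intro: add_nonneg_nonneg)
  have "s' + r * (s - s') - s = (1 - r) * (s' - s)" by (simp add: algebra_simps)
  then have "\<bar>s' + r * (s - s') - s\<bar> = (1 - r) * \<bar>s - s'\<bar>"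
    using assms by (simp add: abs_mult abs_minus_commute)
  also have "\<dots> \<le> \<bar>s - s'\<bar>" using assms by (simp add: mult_left_le_one_le)
  finally show "\<bar>s' + r * (s - s') - s\<bar> \<le> \<bar>s - s'\<bar>" .
qed

lemma parallel_form_locally_constant:
  "parallel_form A S \<omega> \<Longrightarrow> k \<in> A \<Longrightarrow> p \<in> S \<Longrightarrow> p \<in> fst k \<Longrightarrow>
    \<exists>U. open U \<and> p \<in> U \<and> (\<forall>q\<in>U \<inter> S \<inter> fst k. \<omega> k q = \<omega> k p)"
  unfolding parallel_form_def by blast

lemma parallel_form_compatible:
  "parallel_form A S \<omega> \<Longrightarrow> k \<in> A \<Longrightarrow> k' \<in> A \<Longrightarrow> p \<in> S \<Longrightarrow> p \<in> fst k \<Longrightarrow> p \<in> fst k' \<Longrightarrow>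
    \<omega> k p \<bullet> v = \<omega> k' p \<bullet> frechet_derivative (transition k k') (at (snd k p)) v"
  unfolding parallel_form_def by blast

lemma parallel_vf_locally_constant:
  "parallel_vf A S X \<Longrightarrow> k \<in> A \<Longrightarrow> p \<in> S \<Longrightarrow> p \<in> fst k \<Longrightarrow>
    \<exists>U. open U \<and> p \<in> U \<and> (\<forall>q\<in>U \<inter> S \<inter> fst k. X k q = X k p)"
  unfolding parallel_vf_def by blast

lemma parallel_vf_compatible:
  "parallel_vf A S X \<Longrightarrow> k \<in> A \<Longrightarrow> k' \<in> A \<Longrightarrow> p \<in> S \<Longrightarrow> p \<in> fst k \<Longrightarrow> p \<in> fst k' \<Longrightarrow>
    X k' p = frechet_derivative (transition k k') (at (snd k p)) (X k p)"
  unfolding parallel_vf_def by blast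

lemma parallel_vf_subset:
  assumes X: "parallel_vf A S X" and W: "W \<subseteq> S"
  shows "parallel_vf A W X"
  unfolding parallel_vf_def
proof (intro conjI ballI)
  fix k p assume "k \<in> A" "p \<in> W \<inter> fst k"
  then obtain U where "open U" "p \<in> U" "\<forall>q\<in>U \<inter> S \<inter> fst k. X k q = X k p"
    using parallel_vf_locally_constant[OF X] W by blast
  then show "\<exists>U. open U \<and> p \<in> U \<and> (\<forall>q\<in>U \<inter> W \<inter> fst k. X k q = X k p)" using W by blast
next
  fix k k' p assume "k \<in> A" "k' \<in> A" "p \<in> W \<inter> fst k \<inter> fst k'"
  then show "X k' p = frechet_derivative (transition k k') (at (snd k p)) (X k p)"
    using parallel_vf_compatible[OF X] W by blast
qed

lemma nonvanishing_vf_subset: "nonvanishing_vf A S X \<Longrightarrow> W \<subseteq> S \<Longrightarrow> nonvanishing_vf A W X"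
  unfolding nonvanishing_vf_def by blast

definition transition_deriv ::
    "('a, 'n::finite) chart \<Rightarrow> ('a, 'n) chart \<Rightarrow> 'a \<Rightarrow> real^'n \<Rightarrow> real^'n" where
  "transition_deriv k k' q = frechet_derivative (transition k k') (at (snd k q))"

text \<open>A covector at q is represented by its coordinate vectors u k in all charts k around q, its value
  on the tangent vector with coordinates v in chart k being u k \<bullet> v. chart_covector k q w is the
  covector at q with coordinates w in chart k.\<close>
definition chart_covector ::
    "('a, 'n::finite) chart \<Rightarrow> 'a \<Rightarrow> real^'n \<Rightarrow> ('a, 'n) chart \<Rightarrow> real^'n" where
  "chart_covector k q w = (\<lambda>k'. \<chi> i. w \<bullet> transition_deriv k' k q (axis i 1))"

locale affine_manifold =
  fixes A :: "('a::topological_space, 'n::finite) chart set"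
  assumes affine_atlas: "affine_atlas A"
begin

subsection \<open>Charts and transition derivatives\<close>

lemma chart_cover: "\<exists>k\<in>A. p \<in> fst k"
  using affine_atlas unfolding affine_atlas_def by blast

lemma open_chart_domain: "k \<in> A \<Longrightarrow> open (fst k)"
  using affine_atlas unfolding affine_atlas_def by blast

lemma open_chart_image: "k \<in> A \<Longrightarrow> open (snd k ` fst k)"
  using affine_atlas unfolding affine_atlas_def by blast

lemma chart_homeomorphism: "k \<in> A \<Longrightarrow> homeomorphism (fst k) (snd k ` fst k) (snd k) (chart_inv k)"
  using affine_atlas unfolding affine_atlas_def by blast

lemma chart_inv_chart: "k \<in> A \<Longrightarrow> p \<in> fst k \<Longrightarrow> chart_inv k (snd k p) = p"
  using chart_homeomorphism unfolding homeomorphism_def by blast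

lemma open_chart_image_subset: "k \<in> A \<Longrightarrow> open V \<Longrightarrow> V \<subseteq> fst k \<Longrightarrow> open (snd k ` V)"
  by (meson chart_homeomorphism open_chart_image homeomorphism_imp_open_map open_subset
      openin_open_trans)

lemma open_chart_vimage:
  assumes "k \<in> A" "open V"
  shows "open (fst k \<inter> snd k -` V)"
proof -
  have "continuous_on (fst k) (snd k)" using chart_homeomorphism[OF assms(1)] homeomorphism_def by blast
  then show ?thesis
    using continuous_on_open_vimage open_chart_domain[OF assms(1)] assms(2) by (metis Int_commute)
qed

lemma open_chart_overlap_image: "k \<in> A \<Longrightarrow> k' \<in> A \<Longrightarrow> open (snd k ` (fst k \<inter> fst k'))"
  by (meson open_chart_image_subset open_chart_domain open_Int inf_le1)

lemma transition_chart: "k \<in> A \<Longrightarrow> p \<in> fst k \<Longrightarrow> transition k k' (snd k p) = snd k' p"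
  by (simp add: transition_def chart_inv_chart)

lemma open_chart_inv_image: "k \<in> A \<Longrightarrow> open V \<Longrightarrow> V \<subseteq> snd k ` fst k \<Longrightarrow> open (chart_inv k ` V)"
  by (meson chart_homeomorphism homeomorphism_symD open_chart_domain open_chart_image
      homeomorphism_imp_open_map open_subset openin_open_trans)

lemma chart_neighbourhood:
  assumes k: "k \<in> A" and I: "open I" and p: "p \<in> I" "p \<in> fst k"
  obtains W where "open W" "p \<in> W" "W \<subseteq> I \<inter> fst k" "simply_connected W" "path_connected W"
proof -
  have "open (snd k ` (I \<inter> fst k))"
    using open_chart_image_subset[OF k] I open_chart_domain[OF k] by blast
  moreover have "snd k p \<in> snd k ` (I \<inter> fst k)" using p by blast
  ultimately obtain r where r: "r > 0" "ball (snd k p) r \<subseteq> snd k ` (I \<inter> fst k)"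
    using open_contains_ball by blast
  define W where "W = chart_inv k ` ball (snd k p) r"
  have ball: "ball (snd k p) r \<subseteq> snd k ` fst k" using r(2) by blast
  have hom: "homeomorphism (ball (snd k p) r) W (chart_inv k) (snd k)"
    by (rule homeomorphism_of_subsets[OF homeomorphism_symD[OF chart_homeomorphism[OF k]] ball
          order_refl]) (simp add: W_def)
  have sub: "W \<subseteq> I \<inter> fst k"
  proof
    fix q assume "q \<in> W"
    then obtain y where "y \<in> ball (snd k p) r" "q = chart_inv k y" unfolding W_def by blast
    then obtain z where "z \<in> I \<inter> fst k" "q = chart_inv k (snd k z)" using r(2) by blast
    then show "q \<in> I \<inter> fst k" using chart_inv_chart[OF k] by auto
  qed
  have "open W" unfolding W_def by (rule open_chart_inv_image[OF k open_ball ball])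
  moreover have "p \<in> W"
    unfolding W_def using chart_inv_chart[OF k p(2)] r(1) by (metis centre_in_ball imageI)
  moreover have "simply_connected W"
    using homeomorphic_simply_connected[OF _ convex_imp_simply_connected[OF convex_ball]] hom
    unfolding homeomorphic_def by blast
  moreover have "path_connected W"
    using homeomorphic_path_connectedness convex_imp_path_connected[OF convex_ball] hom
    unfolding homeomorphic_def by blast
  ultimately show ?thesis using sub by (intro that)
qed

lemma transition_has_derivative_near:
  assumes k: "k \<in> A" and k': "k' \<in> A" and q: "q \<in> fst k" "q \<in> fst k'"
  shows "\<exists>N. open N \<and> q \<in> N \<and> N \<subseteq> fst k \<inter> fst k' \<and>
     (\<forall>q'\<in>N. (transition k k' has_derivative transition_deriv k k' q) (at (snd k q')))"
proof -
  define G where "G = snd k ` (fst k \<inter> fst k')"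
  have xG: "snd k q \<in> G" using q G_def by blast
  obtain e L b where e: "e > 0" and L: "linear L"
    and affine: "\<forall>y\<in>ball (snd k q) e \<inter> G. transition k k' y = L y + b"
    using affine_atlas xG k k' unfolding affine_atlas_def G_def by blast
  define V where "V = ball (snd k q) e \<inter> G"
  have oV: "open V" using open_chart_overlap_image[OF k k'] V_def G_def by blast
  have D: "(transition k k' has_derivative L) (at y)" if "y \<in> V" for y
  proof -
    have "((\<lambda>y. L y + b) has_derivative L) (at y)"
      by (intro has_derivative_add_const linear_imp_has_derivative L)
    then show ?thesis
      by (rule has_derivative_transform_within_open[OF _ oV that]) (use affine V_def in auto)
  qed
  have qV: "snd k q \<in> V" using V_def xG e by simp
  have L_eq: "transition_deriv k k' q = L"
    unfolding transition_deriv_def using D[OF qV] frechet_derivative_at by metis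
  define N where "N = fst k \<inter> snd k -` V"
  have "N \<subseteq> fst k \<inter> fst k'"
  proof
    fix x assume "x \<in> N"
    then have x: "x \<in> fst k" "snd k x \<in> G" using N_def V_def by auto
    from x(2) obtain p where p: "snd k x = snd k p" "p \<in> fst k \<inter> fst k'"
      unfolding G_def by (rule imageE)
    then have "x = p" using chart_inv_chart[OF k x(1)] chart_inv_chart[OF k] by force
    then show "x \<in> fst k \<inter> fst k'" using p by simp
  qed
  moreover have "open N" using open_chart_vimage[OF k oV] N_def by simp
  ultimately show ?thesis using D L_eq N_def qV q by auto
qed

lemma has_derivative_transition:
  "k \<in> A \<Longrightarrow> k' \<in> A \<Longrightarrow> q \<in> fst k \<Longrightarrow> q \<in> fst k' \<Longrightarrow>
    (transition k k' has_derivative transition_deriv k k' q) (at (snd k q))"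
  using transition_has_derivative_near by blast

lemma linear_transition_deriv:
  "k \<in> A \<Longrightarrow> k' \<in> A \<Longrightarrow> q \<in> fst k \<Longrightarrow> q \<in> fst k' \<Longrightarrow> linear (transition_deriv k k' q)"
  using has_derivative_transition has_derivative_linear by blast

lemma transition_deriv_locally_constant:
  assumes "k \<in> A" "k' \<in> A" "q \<in> fst k" "q \<in> fst k'"
  shows "\<exists>N. open N \<and> q \<in> N \<and> N \<subseteq> fst k \<inter> fst k' \<and>
     (\<forall>q'\<in>N. transition_deriv k k' q' = transition_deriv k k' q)"
proof -
  obtain N where N: "open N" "q \<in> N" "N \<subseteq> fst k \<inter> fst k'"
     "\<forall>q'\<in>N. (transition k k' has_derivative transition_deriv k k' q) (at (snd k q'))"
    using transition_has_derivative_near[OF assms] by blast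
  then show ?thesis unfolding transition_deriv_def by (metis frechet_derivative_at)
qed

lemma transition_deriv_self:
  assumes k: "k \<in> A" and q: "q \<in> fst k"
  shows "transition_deriv k k q = id"
proof -
  have "(transition k k has_derivative id) (at (snd k q))"
  proof (rule has_derivative_transform_within_open[OF _ open_chart_image[OF k]])
    show "(id has_derivative id) (at (snd k q))" by (simp add: has_derivative_ident id_def)
  qed (use q chart_homeomorphism[OF k] in \<open>auto simp: transition_def homeomorphism_def\<close>)
  then show ?thesis unfolding transition_deriv_def using frechet_derivative_at by metis
qed

lemma has_derivative_chart_change:
  assumes k: "k \<in> A" and k': "k' \<in> A" and q: "q \<in> fst k" "q \<in> fst k'"
    and g: "(g has_derivative D) (at (snd k' q))"
    and fg: "\<And>p. p \<in> fst k \<Longrightarrow> p \<in> fst k' \<Longrightarrow> f (snd k p) = g (snd k' p)"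
  shows "(f has_derivative (\<lambda>v. D (transition_deriv k k' q v))) (at (snd k q))"
proof (rule has_derivative_transform_within_open[OF _ open_chart_overlap_image[OF k k']])
  show "((\<lambda>y. g (transition k k' y)) has_derivative (\<lambda>v. D (transition_deriv k k' q v))) (at (snd k q))"
    using has_derivative_compose[OF has_derivative_transition[OF k k' q]] g transition_chart[OF k q(1)]
    by (simp add: o_def)
  show "snd k q \<in> snd k ` (fst k \<inter> fst k')" using q by blast
  fix y assume "y \<in> snd k ` (fst k \<inter> fst k')"
  then obtain p where "p \<in> fst k" "p \<in> fst k'" "y = snd k p" by blast
  then show "g (transition k k' y) = f y" using fg transition_chart[OF k] by simp
qed

lemma transition_deriv_cocycle:
  assumes k: "k \<in> A" and k': "k' \<in> A" and k'': "k'' \<in> A"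
    and q: "q \<in> fst k" "q \<in> fst k'" "q \<in> fst k''"
  shows "transition_deriv k' k'' q (transition_deriv k k' q v) = transition_deriv k k'' q v"
proof -
  have "(transition k k'' has_derivative (\<lambda>v. transition_deriv k' k'' q (transition_deriv k k' q v)))
      (at (snd k q))"
    by (rule has_derivative_chart_change[OF k k' q(1,2) has_derivative_transition[OF k' k'' q(2,3)]])
       (simp add: transition_chart k k')
  then have "(\<lambda>v. transition_deriv k' k'' q (transition_deriv k k' q v)) = transition_deriv k k'' q"
    unfolding transition_deriv_def[of k k''] by (rule frechet_derivative_at)
  from fun_cong[OF this, of v] show ?thesis by simp
qed

lemma has_derivative_dF:
  assumes F: "smooth_fun A F" and k: "k \<in> A" and c: "c \<in> fst k"
  shows "((F \<circ> chart_inv k) has_derivative dF F k c) (at (snd k c))"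
proof -
  have "Ck_on (Suc 0) (snd k ` fst k) (F \<circ> chart_inv k)"
    using F k unfolding smooth_fun_def smooth_on_set_def by blast
  then have "(F \<circ> chart_inv k) differentiable_on (snd k ` fst k)" by simp
  then have "(F \<circ> chart_inv k) differentiable at (snd k c)"
    using differentiable_on_eq_differentiable_at[OF open_chart_image[OF k]] c by blast
  then show ?thesis unfolding dF_def using frechet_derivative_works by blast
qed

lemma dF_chart_change:
  assumes F: "smooth_fun A F" and k: "k \<in> A" and k': "k' \<in> A" and c: "c \<in> fst k" "c \<in> fst k'"
  shows "dF F k c v = dF F k' c (transition_deriv k k' c v)"
proof -
  have "((F \<circ> chart_inv k) has_derivative (\<lambda>v. dF F k' c (transition_deriv k k' c v))) (at (snd k c))"
    by (rule has_derivative_chart_change[OF k k' c has_derivative_dF[OF F k' c(2)]])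
       (simp add: chart_inv_chart k k')
  then have "(\<lambda>v. dF F k' c (transition_deriv k k' c v)) = dF F k c"
    unfolding dF_def[of F k] by (rule frechet_derivative_at)
  from fun_cong[OF this, of v] show ?thesis by simp
qed

subsection \<open>Covectors\<close>

definition covector_at :: "'a \<Rightarrow> (('a, 'n) chart \<Rightarrow> real^'n) \<Rightarrow> bool" where
  "covector_at q u \<longleftrightarrow> (\<forall>k\<in>A. \<forall>k'\<in>A. q \<in> fst k \<longrightarrow> q \<in> fst k' \<longrightarrow>
      (\<forall>v. u k \<bullet> v = u k' \<bullet> transition_deriv k k' q v))"

definition agree_at :: "'a \<Rightarrow> (('a, 'n) chart \<Rightarrow> real^'n) \<Rightarrow> (('a, 'n) chart \<Rightarrow> real^'n) \<Rightarrow> bool" where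
  "agree_at q u u' \<longleftrightarrow> (\<forall>k\<in>A. q \<in> fst k \<longrightarrow> u k = u' k)"

lemma agree_at_refl: "agree_at q u u"
  by (simp add: agree_at_def)

lemma agree_at_sym: "agree_at q u u' \<Longrightarrow> agree_at q u' u"
  by (simp add: agree_at_def)

lemma agree_at_trans: "agree_at q u u' \<Longrightarrow> agree_at q u' u'' \<Longrightarrow> agree_at q u u''"
  by (simp add: agree_at_def)

lemma agree_atD: "agree_at q u u' \<Longrightarrow> k \<in> A \<Longrightarrow> q \<in> fst k \<Longrightarrow> u k = u' k"
  by (simp add: agree_at_def)

lemma covector_at_agree: "covector_at q u \<Longrightarrow> agree_at q u u' \<Longrightarrow> covector_at q u'"
  unfolding covector_at_def agree_at_def by metis

lemma inner_chart_covector: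
  assumes "k \<in> A" "k' \<in> A" "q \<in> fst k" "q \<in> fst k'"
  shows "chart_covector k q w k' \<bullet> v = w \<bullet> transition_deriv k' k q v"
proof -
  have L: "linear (transition_deriv k' k q)" by (rule linear_transition_deriv[OF assms(2,1,4,3)])
  have "linear ((\<lambda>x. w \<bullet> x) \<circ> transition_deriv k' k q)"
    by (rule linear_compose[OF L bounded_linear.linear[OF bounded_linear_inner_right]])
  from linear_eq_inner_axis[OF this, of v]
  have "w \<bullet> transition_deriv k' k q v = (\<chi> i. w \<bullet> transition_deriv k' k q (axis i 1)) \<bullet> v"
    by (simp only: o_def)
  then show ?thesis unfolding chart_covector_def by (rule sym)
qed

lemma chart_covector_self: "k \<in> A \<Longrightarrow> q \<in> fst k \<Longrightarrow> chart_covector k q w k = w"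
  by (simp add: chart_covector_def transition_deriv_self vec_eq_iff inner_axis)

lemma covector_at_chart_covector:
  assumes k: "k \<in> A" and q: "q \<in> fst k"
  shows "covector_at q (chart_covector k q w)"
  unfolding covector_at_def
proof (intro ballI impI allI)
  fix k1 k2 v assume k12: "k1 \<in> A" "k2 \<in> A" "q \<in> fst k1" "q \<in> fst k2"
  show "chart_covector k q w k1 \<bullet> v = chart_covector k q w k2 \<bullet> transition_deriv k1 k2 q v"
    using inner_chart_covector[OF k k12(1) q k12(3)] inner_chart_covector[OF k k12(2) q k12(4)]
      transition_deriv_cocycle[OF k12(1,2) k k12(3,4) q] by simp
qed

lemma agree_at_iff_chart:
  assumes u: "covector_at q u" and u': "covector_at q u'" and k: "k \<in> A" "q \<in> fst k"
  shows "agree_at q u u' \<longleftrightarrow> u k = u' k"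
proof
  assume "u k = u' k"
  have "u k' = u' k'" if k': "k' \<in> A" "q \<in> fst k'" for k'
  proof -
    have "u k' \<bullet> v = u' k' \<bullet> v" for v
      using u u' k k' \<open>u k = u' k\<close> unfolding covector_at_def by metis
    then show ?thesis using vector_eq_rdot by blast
  qed
  then show "agree_at q u u'" unfolding agree_at_def by blast
qed (use k in \<open>simp add: agree_at_def\<close>)

lemma agree_at_chart_covector:
  assumes "covector_at q u" "k \<in> A" "q \<in> fst k"
  shows "agree_at q (chart_covector k q (u k)) u"
  using agree_at_iff_chart[OF covector_at_chart_covector[OF assms(2,3)] assms]
    chart_covector_self[OF assms(2,3)] by simp

lemma chart_covector_locally_constant:
  assumes "k \<in> A" "k' \<in> A" "q \<in> fst k" "q \<in> fst k'"
  shows "\<exists>N. open N \<and> q \<in> N \<and> N \<subseteq> fst k \<inter> fst k' \<and>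
    (\<forall>q'\<in>N. chart_covector k q' w k' = chart_covector k q w k')"
proof -
  obtain N where N: "open N" "q \<in> N" "N \<subseteq> fst k' \<inter> fst k"
      "\<forall>q'\<in>N. transition_deriv k' k q' = transition_deriv k' k q"
    using transition_deriv_locally_constant[OF assms(2,1,4,3)] by blast
  have "chart_covector k q' w k' = chart_covector k q w k'" if "q' \<in> N" for q'
    using N(4) that unfolding chart_covector_def by (simp only:)
  then show ?thesis using N(1-3) by blast
qed

lemma dF_covector:
  assumes F: "smooth_fun A F"
  shows "\<exists>d. covector_at c d \<and> (\<forall>k\<in>A. c \<in> fst k \<longrightarrow> (\<forall>v. d k \<bullet> v = dF F k c v))"
proof -
  obtain k0 where k0: "k0 \<in> A" "c \<in> fst k0" using chart_cover by blast
  define d where "d = chart_covector k0 c (\<chi> i. dF F k0 c (axis i 1))"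
  have lin: "linear (dF F k0 c)" using has_derivative_dF[OF F k0] has_derivative_linear by blast
  have "d k \<bullet> v = dF F k c v" if k: "k \<in> A" "c \<in> fst k" for k v
  proof -
    have "d k \<bullet> v = (\<chi> i. dF F k0 c (axis i 1)) \<bullet> transition_deriv k k0 c v"
      unfolding d_def by (rule inner_chart_covector[OF k0(1) k(1) k0(2) k(2)])
    also have "\<dots> = dF F k0 c (transition_deriv k k0 c v)"
      by (rule linear_eq_inner_axis[OF lin, symmetric])
    also have "\<dots> = dF F k c v" by (rule dF_chart_change[OF F k(1) k0(1) k(2) k0(2), symmetric])
    finally show ?thesis .
  qed
  then show ?thesis using covector_at_chart_covector[OF k0] unfolding d_def by blast
qed

subsection \<open>Parallel transport along curves\<close>

text \<open>The transition maps are locally affine, so parallel transport of covectors keeps their chart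
  coordinates locally constant.\<close>
definition parallel_along :: "real set \<Rightarrow> (real \<Rightarrow> 'a) \<Rightarrow> (real \<Rightarrow> ('a, 'n) chart \<Rightarrow> real^'n) \<Rightarrow> bool"
  where "parallel_along Z f \<sigma> \<longleftrightarrow> (\<forall>z\<in>Z. covector_at (f z) (\<sigma> z)) \<and>
     (\<forall>k\<in>A. \<forall>z\<in>Z. f z \<in> fst k \<longrightarrow> (\<exists>e>0. \<forall>z'\<in>Z. dist z' z < e \<longrightarrow> \<sigma> z' k = \<sigma> z k))"

lemma parallel_along_covector_at: "parallel_along Z f \<sigma> \<Longrightarrow> z \<in> Z \<Longrightarrow> covector_at (f z) (\<sigma> z)"
  unfolding parallel_along_def by blast

lemma parallel_along_locally_constant:
  "parallel_along Z f \<sigma> \<Longrightarrow> k \<in> A \<Longrightarrow> z \<in> Z \<Longrightarrow> f z \<in> fst k \<Longrightarrow>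
    \<exists>e>0. \<forall>z'\<in>Z. dist z' z < e \<longrightarrow> \<sigma> z' k = \<sigma> z k"
  unfolding parallel_along_def by blast

lemma parallel_along_cong: "(\<And>t. t \<in> Z \<Longrightarrow> f t = g t) \<Longrightarrow> parallel_along Z f \<sigma> \<longleftrightarrow> parallel_along Z g \<sigma>"
  unfolding parallel_along_def by simp

lemma parallel_along_unique:
  assumes Z: "connected Z" and f: "continuous_on Z f"
    and \<sigma>: "parallel_along Z f \<sigma>" and \<tau>: "parallel_along Z f \<tau>"
    and z0: "z0 \<in> Z" "agree_at (f z0) (\<sigma> z0) (\<tau> z0)" and z: "z \<in> Z"
  shows "agree_at (f z) (\<sigma> z) (\<tau> z)"
proof -
  have "agree_at (f z0) (\<sigma> z0) (\<tau> z0) = agree_at (f z) (\<sigma> z) (\<tau> z)"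
  proof (rule locally_constant_on_connected[OF Z z0(1) z])
    fix a assume a: "a \<in> Z"
    obtain k where k: "k \<in> A" "f a \<in> fst k" using chart_cover by blast
    obtain e1 where e1: "e1 > 0" "\<forall>z'\<in>Z. dist z' a < e1 \<longrightarrow> \<sigma> z' k = \<sigma> a k"
      using parallel_along_locally_constant[OF \<sigma> k(1) a k(2)] by blast
    obtain e2 where e2: "e2 > 0" "\<forall>z'\<in>Z. dist z' a < e2 \<longrightarrow> \<tau> z' k = \<tau> a k"
      using parallel_along_locally_constant[OF \<tau> k(1) a k(2)] by blast
    obtain e3 where e3: "e3 > 0" "\<forall>z'\<in>Z. dist z' a < e3 \<longrightarrow> f z' \<in> fst k"
      using continuous_on_imp_dist_in_open[OF f a open_chart_domain[OF k(1)] k(2)] by blast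
    define r where "r = min e1 (min e2 e3)"
    have "agree_at (f x) (\<sigma> x) (\<tau> x) = agree_at (f a) (\<sigma> a) (\<tau> a)" if "x \<in> ball a r \<inter> Z" for x
    proof -
      from that have x: "x \<in> Z" "dist x a < e1" "dist x a < e2" "dist x a < e3"
        unfolding r_def by (auto simp: dist_commute)
      have "agree_at (f x) (\<sigma> x) (\<tau> x) \<longleftrightarrow> \<sigma> x k = \<tau> x k"
        using agree_at_iff_chart[OF parallel_along_covector_at[OF \<sigma> x(1)]
            parallel_along_covector_at[OF \<tau> x(1)] k(1)] e3 x by blast
      also have "\<dots> \<longleftrightarrow> \<sigma> a k = \<tau> a k" using e1 e2 x by simp
      also have "\<dots> \<longleftrightarrow> agree_at (f a) (\<sigma> a) (\<tau> a)"
        using agree_at_iff_chart[OF parallel_along_covector_at[OF \<sigma> a]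
            parallel_along_covector_at[OF \<tau> a] k] by blast
      finally show ?thesis .
    qed
    moreover have "a \<in> ball a r" using e1 e2 e3 r_def by simp
    ultimately show "\<exists>U. open U \<and> a \<in> U \<and>
        (\<forall>x\<in>U \<inter> Z. agree_at (f x) (\<sigma> x) (\<tau> x) = agree_at (f a) (\<sigma> a) (\<tau> a))"
      using open_ball by blast
  qed
  then show ?thesis using z0(2) by simp
qed

lemma parallel_along_chart_covector:
  assumes f: "continuous_on Z f" and k: "k \<in> A" and fk: "\<forall>z\<in>Z. f z \<in> fst k"
  shows "parallel_along Z f (\<lambda>z. chart_covector k (f z) w)"
  unfolding parallel_along_def
proof (intro conjI ballI impI)
  fix z assume "z \<in> Z"
  then show "covector_at (f z) (chart_covector k (f z) w)"
    using covector_at_chart_covector k fk by blast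
next
  fix k' z assume k': "k' \<in> A" and z: "z \<in> Z" and fz: "f z \<in> fst k'"
  obtain N where N: "open N" "f z \<in> N" "\<forall>q\<in>N. chart_covector k q w k' = chart_covector k (f z) w k'"
    using chart_covector_locally_constant[OF k k' _ fz] fk z by blast
  obtain e where "e > 0" "\<forall>y\<in>Z. dist y z < e \<longrightarrow> f y \<in> N"
    using continuous_on_imp_dist_in_open[OF f z N(1,2)] by blast
  then show "\<exists>e>0. \<forall>z'\<in>Z. dist z' z < e \<longrightarrow> chart_covector k (f z') w k' = chart_covector k (f z) w k'"
    using N(3) by blast
qed

lemma parallel_along_chart_constant:
  assumes Z: "connected Z" and f: "continuous_on Z f" and \<sigma>: "parallel_along Z f \<sigma>"
    and k: "k \<in> A" and fk: "\<forall>z\<in>Z. f z \<in> fst k" and z: "z \<in> Z" "z' \<in> Z"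
  shows "\<sigma> z' k = \<sigma> z k"
proof -
  have \<tau>: "parallel_along Z f (\<lambda>t. chart_covector k (f t) (\<sigma> z k))"
    by (rule parallel_along_chart_covector[OF f k fk])
  have "agree_at (f z) (\<sigma> z) (chart_covector k (f z) (\<sigma> z k))"
    using agree_at_sym[OF agree_at_chart_covector[OF parallel_along_covector_at[OF \<sigma> z(1)] k]] fk z
    by blast
  then have "agree_at (f z') (\<sigma> z') (chart_covector k (f z') (\<sigma> z k))"
    by (rule parallel_along_unique[OF Z f \<sigma> \<tau> z(1) _ z(2)])
  then have "\<sigma> z' k = chart_covector k (f z') (\<sigma> z k) k" using agree_atD k fk z(2) by blast
  also have "\<dots> = \<sigma> z k" using chart_covector_self[OF k] fk z(2) by blast
  finally show ?thesis .
qed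

text \<open>The overlap of two charts may be disconnected, so the continuations of a covector with
  constant coordinates in either chart can only be compared along a path inside both charts.\<close>
lemma chart_covectors_agree_along_path:
  fixes g :: "real \<Rightarrow> 'a"
  assumes g: "continuous_on {0..1} g" and k1: "k1 \<in> A" "\<forall>t\<in>{0..1}. g t \<in> fst k1"
    and k2: "k2 \<in> A" "\<forall>t\<in>{0..1}. g t \<in> fst k2" and u: "covector_at (g 0) u"
  shows "agree_at (g 1) (chart_covector k1 (g 1) (u k1)) (chart_covector k2 (g 1) (u k2))"
proof -
  have I01: "(0::real) \<in> {0..1}" "(1::real) \<in> {0..1}" by simp_all
  then have g01: "g 0 \<in> fst k1" "g 0 \<in> fst k2" "g 1 \<in> fst k1" "g 1 \<in> fst k2"
    using k1(2) k2(2) by blast+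
  have "chart_covector k1 (g 1) (u k1) k2 = chart_covector k1 (g 0) (u k1) k2"
    using parallel_along_chart_constant[OF connected_Icc g parallel_along_chart_covector[OF g k1] k2,
        of 0 1]
    by simp
  also have "\<dots> = u k2" using agree_atD[OF agree_at_chart_covector[OF u k1(1) g01(1)] k2(1) g01(2)] .
  also have "\<dots> = chart_covector k2 (g 1) (u k2) k2" using chart_covector_self[OF k2(1) g01(4)] by simp
  finally show ?thesis
    using agree_at_iff_chart[OF covector_at_chart_covector[OF k1(1) g01(3)]
        covector_at_chart_covector[OF k2(1) g01(4)] k2(1) g01(4)] by blast
qed

lemma parallel_along_affine_reparam:
  assumes \<sigma>: "parallel_along {0..1} f \<sigma>" and into: "\<And>t. t \<in> {0..1} \<Longrightarrow> \<alpha>*t + \<beta> \<in> {0..1::real}"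
  shows "parallel_along {0..1} (\<lambda>t. f (\<alpha>*t + \<beta>)) (\<lambda>t. \<sigma> (\<alpha>*t + \<beta>))"
  unfolding parallel_along_def
proof (intro conjI ballI impI)
  fix z :: real assume "z \<in> {0..1}"
  then show "covector_at (f (\<alpha>*z + \<beta>)) (\<sigma> (\<alpha>*z + \<beta>))"
    using parallel_along_covector_at[OF \<sigma> into] by blast
next
  fix k z assume k: "k \<in> A" and z: "z \<in> {0..1::real}" and fz: "f (\<alpha>*z + \<beta>) \<in> fst k"
  obtain e where e: "e > 0" "\<forall>z'\<in>{0..1}. dist z' (\<alpha>*z + \<beta>) < e \<longrightarrow> \<sigma> z' k = \<sigma> (\<alpha>*z + \<beta>) k"
    using parallel_along_locally_constant[OF \<sigma> k into[OF z] fz] by blast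
  define e' where "e' = e / (\<bar>\<alpha>\<bar> + 1)"
  have e': "e' > 0" using e e'_def by simp
  have "\<sigma> (\<alpha>*z' + \<beta>) k = \<sigma> (\<alpha>*z + \<beta>) k" if "z' \<in> {0..1}" "dist z' z < e'" for z'
  proof -
    have "dist (\<alpha>*z' + \<beta>) (\<alpha>*z + \<beta>) = \<bar>\<alpha>\<bar> * dist z' z"
      by (simp add: dist_real_def abs_mult[symmetric] algebra_simps)
    also have "\<dots> \<le> \<bar>\<alpha>\<bar> * e'" using that by (simp add: mult_left_mono)
    also have "\<dots> < e" using e e'_def e' by (simp add: field_simps)
    finally show ?thesis using e into that by blast
  qed
  then show "\<exists>e>0. \<forall>z'\<in>{0..1}. dist z' z < e \<longrightarrow> \<sigma> (\<alpha>*z' + \<beta>) k = \<sigma> (\<alpha>*z + \<beta>) k"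
    using e' by blast
qed

lemma parallel_along_glue:
  assumes \<sigma>: "parallel_along {a..b} f \<sigma>" and \<tau>: "parallel_along {b..c} f \<tau>"
    and agree: "agree_at (f b) (\<sigma> b) (\<tau> b)"
  shows "parallel_along {a..c} f (\<lambda>t. if t \<le> b then \<sigma> t else \<tau> t)"
  unfolding parallel_along_def
proof (intro conjI ballI impI)
  fix z assume z: "z \<in> {a..c}"
  show "covector_at (f z) (if z \<le> b then \<sigma> z else \<tau> z)"
    using parallel_along_covector_at[OF \<sigma>, of z] parallel_along_covector_at[OF \<tau>, of z] z
    by (cases "z \<le> b") simp_all
next
  fix k z assume k: "k \<in> A" and z: "z \<in> {a..c}" and fz: "f z \<in> fst k"
  have "\<exists>e>0. \<forall>z'\<in>{a..c}. dist z' z < e \<longrightarrow>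
      (if z' \<le> b then \<sigma> z' k else \<tau> z' k) = (if z \<le> b then \<sigma> z k else \<tau> z k)"
  proof (rule locally_constant_glue[OF _ _ _ z])
    show "z \<in> {a..b} \<Longrightarrow> \<exists>e>0. \<forall>z'\<in>{a..b}. dist z' z < e \<longrightarrow> \<sigma> z' k = \<sigma> z k"
      by (rule parallel_along_locally_constant[OF \<sigma> k _ fz])
    show "z \<in> {b..c} \<Longrightarrow> \<exists>e>0. \<forall>z'\<in>{b..c}. dist z' z < e \<longrightarrow> \<tau> z' k = \<tau> z k"
      by (rule parallel_along_locally_constant[OF \<tau> k _ fz])
    show "z = b \<Longrightarrow> \<sigma> b k = \<tau> b k" using agree_atD[OF agree k] fz by blast
  qed
  then show "\<exists>e>0. \<forall>z'\<in>{a..c}. dist z' z < e \<longrightarrow>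
      (if z' \<le> b then \<sigma> z' else \<tau> z') k = (if z \<le> b then \<sigma> z else \<tau> z) k"
    by (simp only: if_distrib[of "\<lambda>u. u k"])
qed

lemma parallel_along_extend:
  assumes f: "continuous_on {a..b} f" and \<sigma>: "parallel_along {0..a} f \<sigma>"
    and ab: "0 \<le> a" "a \<le> b" and k: "k \<in> A" "\<forall>t\<in>{a..b}. f t \<in> fst k"
  shows "parallel_along {0..b} f (\<lambda>t. if t \<le> a then \<sigma> t else chart_covector k (f t) (\<sigma> a k))"
proof (rule parallel_along_glue[OF \<sigma> parallel_along_chart_covector[OF f k]])
  have "a \<in> {0..a}" "f a \<in> fst k" using ab k(2) by simp_all
  then show "agree_at (f a) (\<sigma> a) (chart_covector k (f a) (\<sigma> a k))"
    using agree_at_sym[OF agree_at_chart_covector[OF parallel_along_covector_at[OF \<sigma>] k(1)]] by blast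
qed

lemma uniform_chart_cover:
  fixes f :: "'b::real_normed_vector \<Rightarrow> 'a"
  assumes "compact S" "continuous_on S f"
  shows "\<exists>\<delta>>0. \<forall>x\<in>S. \<exists>k\<in>A. \<forall>y\<in>S. dist y x < \<delta> \<longrightarrow> f y \<in> fst k"
proof -
  have "f ` S \<subseteq> \<Union>(fst ` A)" using chart_cover by blast
  from Lebesgue_number_continuous[OF assms _ this] open_chart_domain show ?thesis by blast
qed

lemma parallel_along_exists:
  assumes f: "continuous_on {0..1} f" and v: "covector_at (f 0) v"
  shows "\<exists>\<sigma>. parallel_along {0..1} f \<sigma> \<and> agree_at (f 0) (\<sigma> 0) v"
proof -
  obtain \<delta> where \<delta>: "\<delta> > 0"
    and chart: "\<forall>x\<in>{0..1}. \<exists>k\<in>A. \<forall>y\<in>{0..1}. dist y x < \<delta> \<longrightarrow> f y \<in> fst k"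
    using uniform_chart_cover[OF compact_Icc f] by blast
  have "\<exists>\<sigma>. parallel_along {0..min 1 (real n * \<delta>/2)} f \<sigma> \<and> agree_at (f 0) (\<sigma> 0) v" for n
  proof (induction n)
    case 0
    have "parallel_along {0..0} f (\<lambda>_. v)"
      unfolding parallel_along_def using v by (auto intro: exI[of _ 1])
    then show ?case by (auto simp: agree_at_refl)
  next
    case (Suc n)
    define a where "a = min 1 (real n * \<delta>/2)"
    define b where "b = min 1 (real (Suc n) * \<delta>/2)"
    obtain \<sigma> where \<sigma>: "parallel_along {0..a} f \<sigma>" "agree_at (f 0) (\<sigma> 0) v"
      using Suc.IH a_def by blast
    have ab: "0 \<le> a" "a \<le> b" "b \<le> a + \<delta>/2" "b \<le> 1"
      using \<delta> unfolding a_def b_def by (auto simp: algebra_simps min_def)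
    then obtain k where k: "k \<in> A" "\<forall>y\<in>{0..1}. dist y a < \<delta> \<longrightarrow> f y \<in> fst k"
      using chart by (meson atLeastAtMost_iff order_trans)
    then have "\<forall>t\<in>{a..b}. f t \<in> fst k" using ab \<delta> by (auto simp: dist_real_def)
    from parallel_along_extend[OF continuous_on_subset[OF f] \<sigma>(1) ab(1,2) k(1) this]
    show ?case using \<sigma>(2) ab(1,4) unfolding b_def by fastforce
  qed
  moreover obtain n :: nat where "2/\<delta> < real n" using reals_Archimedean2 by blast
  then have "min 1 (real n * \<delta>/2) = 1" using \<delta> by (simp add: field_simps)
  ultimately show ?thesis by metis
qed

lemma parallel_along_joinpaths:
  assumes u: "parallel_along {0..1} (g1 +++ g2) u" and join: "pathfinish g1 = pathstart g2"
  shows "parallel_along {0..1} g1 (\<lambda>t. u (t/2))" and "parallel_along {0..1} g2 (\<lambda>t. u (t/2 + 1/2))"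
proof -
  have "parallel_along {0..1} (\<lambda>t. (g1 +++ g2) ((1/2)*t + 0)) (\<lambda>t. u ((1/2)*t + 0))"
    by (rule parallel_along_affine_reparam[OF u]) auto
  moreover have "(g1 +++ g2) ((1/2)*t + 0) = g1 t" if "t \<in> {0..1}" for t
    using that by (simp add: joinpaths_def)
  ultimately have "parallel_along {0..1} g1 (\<lambda>t. u ((1/2)*t + 0))"
    using parallel_along_cong[of "{0..1}" "\<lambda>t. (g1 +++ g2) ((1/2)*t + 0)" g1] by blast
  moreover have "(\<lambda>t. u ((1/2)*t + 0)) = (\<lambda>t::real. u (t/2))" by simp
  ultimately show "parallel_along {0..1} g1 (\<lambda>t. u (t/2))" by simp
  have "parallel_along {0..1} (\<lambda>t. (g1 +++ g2) ((1/2)*t + 1/2)) (\<lambda>t. u ((1/2)*t + 1/2))"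
    by (rule parallel_along_affine_reparam[OF u]) auto
  moreover have "(g1 +++ g2) ((1/2)*t + 1/2) = g2 t" if "t \<in> {0..1}" for t
  proof (cases "t = 0")
    case True
    then show ?thesis using join by (simp add: joinpaths_def pathfinish_def pathstart_def)
  qed (use that in \<open>simp add: joinpaths_def\<close>)
  ultimately have "parallel_along {0..1} g2 (\<lambda>t. u ((1/2)*t + 1/2))"
    using parallel_along_cong[of "{0..1}" "\<lambda>t. (g1 +++ g2) ((1/2)*t + 1/2)" g2] by blast
  moreover have "(\<lambda>t. u ((1/2)*t + 1/2)) = (\<lambda>t::real. u (t/2 + 1/2))" by simp
  ultimately show "parallel_along {0..1} g2 (\<lambda>t. u (t/2 + 1/2))" by simp
qed

lemma parallel_along_reversepath:
  assumes "parallel_along {0..1} (reversepath g) u"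
  shows "parallel_along {0..1} g (\<lambda>t. u (1 - t))"
proof -
  have "parallel_along {0..1} (\<lambda>t. reversepath g ((-1)*t + 1)) (\<lambda>t. u ((-1)*t + 1))"
    by (rule parallel_along_affine_reparam[OF assms]) auto
  moreover have "(\<lambda>t. reversepath g ((-1)*t + 1)) = g" "(\<lambda>t. u ((-1)*t + 1)) = (\<lambda>t::real. u (1 - t))"
    by (simp_all add: reversepath_def)
  ultimately show ?thesis by simp
qed

subsection \<open>Holonomy\<close>

definition trivial_holonomy :: "(real \<Rightarrow> 'a) \<Rightarrow> bool" where
  "trivial_holonomy g \<longleftrightarrow> (\<forall>\<sigma>. parallel_along {0..1} g \<sigma> \<longrightarrow> agree_at (g 0) (\<sigma> 1) (\<sigma> 0))"

lemma trivial_holonomy_cong: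
  "(\<And>t. t \<in> {0..1} \<Longrightarrow> f t = g t) \<Longrightarrow> trivial_holonomy f \<longleftrightarrow> trivial_holonomy g"
  unfolding trivial_holonomy_def using parallel_along_cong[of "{0..1}" f g] by simp

lemma trivial_holonomy_const: "trivial_holonomy (\<lambda>_. c)"
  unfolding trivial_holonomy_def
proof (intro allI impI)
  fix \<sigma> assume \<sigma>: "parallel_along {0..1} (\<lambda>_. c) \<sigma>"
  have "parallel_along {0..1} (\<lambda>_. c) (\<lambda>_. \<sigma> 0)"
    unfolding parallel_along_def using parallel_along_covector_at[OF \<sigma>, of 0]
    by (auto intro: exI[of _ 1])
  from parallel_along_unique[OF connected_Icc continuous_on_const \<sigma> this, of 0 1]
  show "agree_at c (\<sigma> 1) (\<sigma> 0)" by (simp add: agree_at_refl)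
qed

text \<open>H deforms the curve H(0,-) into H(1,-) so that each strip H([0,1] \<times> (t0 - \<epsilon>, t0 + \<epsilon>)) stays
  in the single chart K t0. Transporting along the short curves r \<mapsto> H(r,t), i.e. keeping the
  coordinates in K t constant, turns parallel fields along H(0,-) into parallel fields along H(1,-).\<close>
context
  fixes H :: "real \<times> real \<Rightarrow> 'a" and K :: "real \<Rightarrow> ('a, 'n) chart" and \<epsilon> :: real
  assumes H: "continuous_on ({0..1} \<times> {0..1}) H" and \<epsilon>: "\<epsilon> > 0"
    and K: "\<And>t0. t0 \<in> {0..1} \<Longrightarrow>
      K t0 \<in> A \<and> (\<forall>r\<in>{0..1}. \<forall>t\<in>{0..1}. \<bar>t - t0\<bar> < \<epsilon> \<longrightarrow> H (r, t) \<in> fst (K t0))"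
begin

lemma continuous_on_deformation_strip: "t \<in> {0..1} \<Longrightarrow> continuous_on {0..1} (\<lambda>r. H (r, t))"
  by (rule continuous_on_compose2[OF H]) (auto intro!: continuous_intros)

lemma deformation_strip_in_chart:
  "t \<in> {0..1} \<Longrightarrow> t0 \<in> {0..1} \<Longrightarrow> \<bar>t - t0\<bar> < \<epsilon> \<Longrightarrow> \<forall>r\<in>{0..1}. H (r, t) \<in> fst (K t0)"
  using K by blast

lemma deformation_chart_covectors_agree:
  assumes \<sigma>: "parallel_along {0..1} (\<lambda>t. H (0, t)) \<sigma>"
    and t: "t \<in> {0..1}" "t0 \<in> {0..1}" "\<bar>t - t0\<bar> < \<epsilon>"
  shows "agree_at (H (1, t)) (chart_covector (K t) (H (1, t)) (\<sigma> t (K t)))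
    (chart_covector (K t0) (H (1, t)) (\<sigma> t (K t0)))"
proof -
  have "\<forall>r\<in>{0..1}. H (r, t) \<in> fst (K t)" using deformation_strip_in_chart[OF t(1) t(1)] \<epsilon> by simp
  from chart_covectors_agree_along_path[OF continuous_on_deformation_strip[OF t(1)] _ this _
      deformation_strip_in_chart[OF t] parallel_along_covector_at[OF \<sigma> t(1)]]
  show ?thesis using K t by simp
qed

lemma parallel_along_deformation:
  assumes \<sigma>: "parallel_along {0..1} (\<lambda>t. H (0, t)) \<sigma>"
  shows "parallel_along {0..1} (\<lambda>t. H (1, t)) (\<lambda>t. chart_covector (K t) (H (1, t)) (\<sigma> t (K t)))"
  unfolding parallel_along_def
proof (intro conjI ballI impI)
  fix t :: real assume t: "t \<in> {0..1}"
  have "H (1, t) \<in> fst (K t)" using deformation_strip_in_chart[OF t t] \<epsilon> by simp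
  then show "covector_at (H (1, t)) (chart_covector (K t) (H (1, t)) (\<sigma> t (K t)))"
    using covector_at_chart_covector K t by blast
next
  fix k' t assume k': "k' \<in> A" and t: "t \<in> {0..1}" and Hk': "H (1, t) \<in> fst k'"
  define k where "k = K t"
  have k: "k \<in> A" "H (0, t) \<in> fst k" "H (1, t) \<in> fst k"
    using K[OF t] deformation_strip_in_chart[OF t t] \<epsilon> unfolding k_def by simp_all
  obtain e1 where e1: "e1 > 0" "\<forall>z\<in>{0..1}. dist z t < e1 \<longrightarrow> \<sigma> z k = \<sigma> t k"
    using parallel_along_locally_constant[OF \<sigma> k(1) t k(2)] by blast
  obtain N where N: "open N" "H (1, t) \<in> N" "N \<subseteq> fst k \<inter> fst k'"
      "\<forall>q\<in>N. chart_covector k q (\<sigma> t k) k' = chart_covector k (H (1, t)) (\<sigma> t k) k'"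
    using chart_covector_locally_constant[OF k(1) k' k(3) Hk'] by blast
  have row: "continuous_on {0..1} (\<lambda>t. H (1, t))"
    by (rule continuous_on_compose2[OF H]) (auto intro!: continuous_intros)
  obtain e2 where e2: "e2 > 0" "\<forall>y\<in>{0..1}. dist y t < e2 \<longrightarrow> H (1, y) \<in> N"
    using continuous_on_imp_dist_in_open[OF row t N(1,2)] by blast
  have "chart_covector (K z) (H (1, z)) (\<sigma> z (K z)) k' = chart_covector k (H (1, t)) (\<sigma> t k) k'"
    if z: "z \<in> {0..1}" "dist z t < min (min e1 e2) \<epsilon>" for z
  proof -
    have d: "dist z t < e1" "dist z t < e2" "\<bar>z - t\<bar> < \<epsilon>" using z(2) by (auto simp: dist_real_def)
    have HzN: "H (1, z) \<in> N" using e2(2) z(1) d(2) by blast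
    have \<sigma>z: "\<sigma> z k = \<sigma> t k" using e1(2) z(1) d(1) by blast
    have "chart_covector (K z) (H (1, z)) (\<sigma> z (K z)) k' = chart_covector k (H (1, z)) (\<sigma> z k) k'"
      using agree_atD[OF deformation_chart_covectors_agree[OF \<sigma> z(1) t d(3)] k'] HzN N(3)
      unfolding k_def by blast
    also have "\<dots> = chart_covector k (H (1, z)) (\<sigma> t k) k'" by (simp only: \<sigma>z)
    also have "\<dots> = chart_covector k (H (1, t)) (\<sigma> t k) k'" using N(4) HzN by blast
    finally show ?thesis .
  qed
  moreover have "min (min e1 e2) \<epsilon> > 0" using e1(1) e2(1) \<epsilon> by simp
  ultimately show "\<exists>e>0. \<forall>z\<in>{0..1}. dist z t < e \<longrightarrow>
      chart_covector (K z) (H (1, z)) (\<sigma> z (K z)) k' = chart_covector (K t) (H (1, t)) (\<sigma> t (K t)) k'"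
    unfolding k_def by blast
qed

lemma trivial_holonomy_deformation:
  assumes loop: "\<forall>r\<in>{0..1}. H (r, 1) = H (r, 0)" and hol: "trivial_holonomy (\<lambda>t. H (1, t))"
  shows "trivial_holonomy (\<lambda>t. H (0, t))"
  unfolding trivial_holonomy_def
proof (intro allI impI)
  fix \<sigma> assume \<sigma>: "parallel_along {0..1} (\<lambda>t. H (0, t)) \<sigma>"
  define k0 where "k0 = K 0"
  have I: "(0::real) \<in> {0..1}" "(1::real) \<in> {0..1}" by simp_all
  have k0: "k0 \<in> A" "\<forall>r\<in>{0..1}. H (r, 0) \<in> fst k0"
    using K[OF I(1)] deformation_strip_in_chart[OF I(1) I(1)] \<epsilon> unfolding k0_def by simp_all
  then have k0': "\<forall>r\<in>{0..1}. H (r, 1) \<in> fst k0" using loop by simp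
  have k1: "K 1 \<in> A" "\<forall>r\<in>{0..1}. H (r, 1) \<in> fst (K 1)"
    using K[OF I(2)] deformation_strip_in_chart[OF I(2) I(2)] \<epsilon> by simp_all
  have cov: "covector_at (H (0, 0)) (\<sigma> 1)" "covector_at (H (0, 0)) (\<sigma> 0)"
    using parallel_along_covector_at[OF \<sigma> I(2)] parallel_along_covector_at[OF \<sigma> I(1)] loop I(1)
    by simp_all
  have H1: "H (1, 1) = H (1, 0)" "H (1, 0) \<in> fst k0" using loop k0(2) I(2) by simp_all
  have "agree_at (H (1, 0)) (chart_covector (K 1) (H (1, 1)) (\<sigma> 1 (K 1)))
      (chart_covector k0 (H (1, 0)) (\<sigma> 0 k0))"
    using hol parallel_along_deformation[OF \<sigma>] unfolding trivial_holonomy_def k0_def by blast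
  moreover have "agree_at (H (1, 1)) (chart_covector (K 1) (H (1, 1)) (\<sigma> 1 (K 1)))
      (chart_covector k0 (H (1, 1)) (\<sigma> 1 k0))"
    using chart_covectors_agree_along_path[OF continuous_on_deformation_strip[OF I(2)] k1 k0(1) k0'
        parallel_along_covector_at[OF \<sigma> I(2)]] by simp
  ultimately have "agree_at (H (1, 0)) (chart_covector k0 (H (1, 0)) (\<sigma> 1 k0))
      (chart_covector k0 (H (1, 0)) (\<sigma> 0 k0))"
    unfolding H1(1) by (meson agree_at_sym agree_at_trans)
  from agree_atD[OF this k0(1) H1(2)] have "\<sigma> 1 k0 = \<sigma> 0 k0"
    unfolding chart_covector_self[OF k0(1) H1(2)] .
  then show "agree_at (H (0, 0)) (\<sigma> 1) (\<sigma> 0)"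
    using agree_at_iff_chart[OF cov k0(1)] k0(2) I(1) by blast
qed

end

lemma strip_charts:
  fixes h :: "real \<times> real \<Rightarrow> 'a"
  assumes cover: "\<forall>x\<in>{0..1} \<times> {0..1}. \<exists>k\<in>A. \<forall>y\<in>{0..1} \<times> {0..1}. dist y x < \<delta> \<longrightarrow> h y \<in> fst k"
    and s: "s \<in> {0..1}" "s' \<in> {0..1}" "\<bar>s - s'\<bar> < \<delta>/2"
  obtains K where "\<And>t0. t0 \<in> {0..1} \<Longrightarrow> K t0 \<in> A \<and>
    (\<forall>r\<in>{0..1}. \<forall>t\<in>{0..1}. \<bar>t - t0\<bar> < \<delta>/2 \<longrightarrow> h (s' + r * (s - s'), t) \<in> fst (K t0))"
proof -
  have "\<exists>k\<in>A. \<forall>r\<in>{0..1}. \<forall>t\<in>{0..1}. \<bar>t - t0\<bar> < \<delta>/2 \<longrightarrow> h (s' + r * (s - s'), t) \<in> fst k"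
    if t0: "t0 \<in> {0..1}" for t0
  proof -
    have "(s, t0) \<in> {0..1} \<times> {0..1}" using s(1) t0 by simp
    then obtain k where k: "k \<in> A" "\<forall>y\<in>{0..1} \<times> {0..1}. dist y (s, t0) < \<delta> \<longrightarrow> h y \<in> fst k"
      using cover by blast
    have "h (s' + r * (s - s'), t) \<in> fst k" if r: "r \<in> {0..1}" "t \<in> {0..1}" "\<bar>t - t0\<bar> < \<delta>/2" for r t
    proof -
      have "dist (s' + r * (s - s'), t) (s, t0) \<le> \<bar>s' + r * (s - s') - s\<bar> + \<bar>t - t0\<bar>"
        using sqrt_sum_squares_le_sum_abs by (simp add: dist_Pair_Pair dist_real_def)
      also have "\<dots> < \<delta>"
        using segment_point_bounds(2)[OF s(1,2) r(1)] s(3) r(3) by linarith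
      finally show ?thesis using k(2) segment_point_bounds(1)[OF s(1,2) r(1)] r(2) by simp
    qed
    then show ?thesis using k(1) by blast
  qed
  then show ?thesis using that by metis
qed

lemma trivial_holonomy_nearby_loop:
  fixes h :: "real \<times> real \<Rightarrow> 'a"
  assumes h: "continuous_on ({0..1} \<times> {0..1}) h" and loop: "\<forall>s\<in>{0..1}. h (s, 1) = h (s, 0)"
    and \<delta>: "\<delta> > 0"
    and cover: "\<forall>x\<in>{0..1} \<times> {0..1}. \<exists>k\<in>A. \<forall>y\<in>{0..1} \<times> {0..1}. dist y x < \<delta> \<longrightarrow> h y \<in> fst k"
    and s: "s \<in> {0..1}" "s' \<in> {0..1}" "\<bar>s - s'\<bar> < \<delta>/2"
    and hol: "trivial_holonomy (\<lambda>t. h (s, t))"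
  shows "trivial_holonomy (\<lambda>t. h (s', t))"
proof -
  define H where "H = (\<lambda>x. h (s' + fst x * (s - s'), snd x))"
  have "continuous_on ({0..1} \<times> {0..1}) H" unfolding H_def
  proof (rule continuous_on_compose2[OF h])
    show "continuous_on ({0..1} \<times> {0..1}) (\<lambda>x. (s' + fst x * (s - s'), snd x))"
      by (intro continuous_intros)
    show "(\<lambda>x. (s' + fst x * (s - s'), snd x)) ` ({0..1} \<times> {0..1}) \<subseteq> {0..1} \<times> {0..1}"
      using segment_point_bounds(1)[OF s(1,2)] by (auto simp: mem_Times_iff)
  qed
  moreover obtain K where "\<And>t0. t0 \<in> {0..1} \<Longrightarrow> K t0 \<in> A \<and>
      (\<forall>r\<in>{0..1}. \<forall>t\<in>{0..1}. \<bar>t - t0\<bar> < \<delta>/2 \<longrightarrow> H (r, t) \<in> fst (K t0))"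
    using strip_charts[OF cover s] unfolding H_def by auto
  moreover have "\<forall>r\<in>{0..1}. H (r, 1) = H (r, 0)"
    using loop segment_point_bounds(1)[OF s(1,2)] unfolding H_def by simp
  moreover have "trivial_holonomy (\<lambda>t. H (1, t))" using hol unfolding H_def by simp
  ultimately have "trivial_holonomy (\<lambda>t. H (0, t))"
    using trivial_holonomy_deformation[OF _ half_gt_zero[OF \<delta>]] by blast
  then show ?thesis unfolding H_def by simp
qed

lemma trivial_holonomy_homotopy:
  fixes h :: "real \<times> real \<Rightarrow> 'a"
  assumes h: "continuous_on ({0..1} \<times> {0..1}) h" and loop: "\<forall>s\<in>{0..1}. h (s, 1) = h (s, 0)"
  shows "trivial_holonomy (\<lambda>t. h (0, t)) \<longleftrightarrow> trivial_holonomy (\<lambda>t. h (1, t))"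
proof -
  obtain \<delta> where \<delta>: "\<delta> > 0"
    and cover: "\<forall>x\<in>{0..1} \<times> {0..1}. \<exists>k\<in>A. \<forall>y\<in>{0..1} \<times> {0..1}. dist y x < \<delta> \<longrightarrow> h y \<in> fst k"
    using uniform_chart_cover[OF compact_Times[OF compact_Icc compact_Icc] h] by blast
  have "\<exists>U. open U \<and> a \<in> U \<and>
      (\<forall>x\<in>U \<inter> {0..1}. trivial_holonomy (\<lambda>t. h (x, t)) = trivial_holonomy (\<lambda>t. h (a, t)))"
    if a: "a \<in> {0..1}" for a
  proof -
    have "trivial_holonomy (\<lambda>t. h (x, t)) = trivial_holonomy (\<lambda>t. h (a, t))"
      if "x \<in> ball a (\<delta>/2) \<inter> {0..1}" for x
    proof -
      from that have x: "x \<in> {0..1}" "\<bar>a - x\<bar> < \<delta>/2" "\<bar>x - a\<bar> < \<delta>/2"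
        by (auto simp: dist_real_def abs_minus_commute)
      show ?thesis
        using trivial_holonomy_nearby_loop[OF h loop \<delta> cover a x(1) x(2)]
          trivial_holonomy_nearby_loop[OF h loop \<delta> cover x(1) a x(3)] by blast
    qed
    moreover have "a \<in> ball a (\<delta>/2)" using \<delta> by simp
    ultimately show ?thesis using open_ball by blast
  qed
  then show ?thesis
    by (rule locally_constant_on_connected[of "{0..1::real}" 0 1 "\<lambda>s. trivial_holonomy (\<lambda>t. h (s, t))",
          OF connected_Icc, rotated 2]) simp_all
qed

lemma trivial_holonomy_simply_connected:
  assumes S: "simply_connected S" and L: "path L" "path_image L \<subseteq> S" "pathfinish L = pathstart L"
  shows "trivial_holonomy L"
proof -
  define c where "c = pathstart L"
  have c: "c \<in> S" using L(2) pathstart_in_path_image c_def by blast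
  have "path (\<lambda>_::real. c)" "path_image (\<lambda>_::real. c) \<subseteq> S"
    using c by (auto simp: path_def path_image_def)
  then have "homotopic_loops S L (\<lambda>_. c)"
    using S L unfolding simply_connected_def by (simp add: pathstart_def pathfinish_def)
  then obtain h :: "real \<times> real \<Rightarrow> 'a"
    where h: "continuous_on ({0..1} \<times> {0..1}) h" "h \<in> {0..1} \<times> {0..1} \<rightarrow> S"
    "\<forall>t\<in>{0..1}. h (0, t) = L t" "\<forall>t\<in>{0..1}. h (1, t) = c" "\<forall>s\<in>{0..1}. h (s, 1) = h (s, 0)"
    by (rule homotopic_loopsE)
  have "trivial_holonomy (\<lambda>t. h (1, t))"
    using trivial_holonomy_cong[of "\<lambda>t. h (1, t)" "\<lambda>_. c"] h(4) trivial_holonomy_const by simp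
  then have "trivial_holonomy (\<lambda>t. h (0, t))" using trivial_holonomy_homotopy[OF h(1) h(5)] by blast
  then show ?thesis using trivial_holonomy_cong[of "\<lambda>t. h (0, t)" L] h(3) by simp
qed

lemma parallel_along_path_independent:
  fixes g1 g2 :: "real \<Rightarrow> 'a"
  assumes S: "simply_connected S"
    and g1: "path g1" "path_image g1 \<subseteq> S" and g2: "path g2" "path_image g2 \<subseteq> S"
    and ends: "pathstart g1 = pathstart g2" "pathfinish g1 = pathfinish g2"
    and \<sigma>1: "parallel_along {0..1} g1 \<sigma>1" and \<sigma>2: "parallel_along {0..1} g2 \<sigma>2"
    and start: "agree_at (pathstart g1) (\<sigma>1 0) (\<sigma>2 0)"
  shows "agree_at (pathfinish g1) (\<sigma>1 1) (\<sigma>2 1)"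
proof -
  define L where "L = g1 +++ reversepath g2"
  have join: "pathfinish g1 = pathstart (reversepath g2)" using ends by simp
  have L: "path L" "path_image L \<subseteq> S" "pathfinish L = pathstart L"
    using g1 g2 ends path_image_join[OF join] unfolding L_def by (auto simp: join)
  have L0: "L 0 = g1 0" unfolding L_def by (simp add: joinpaths_def)
  have ends': "g2 0 = g1 0" "g2 1 = g1 1" using ends by (simp_all add: pathstart_def pathfinish_def)
  obtain u where u: "parallel_along {0..1} L u" "agree_at (g1 0) (u 0) (\<sigma>1 0)"
    using parallel_along_exists[of L "\<sigma>1 0"] L(1) parallel_along_covector_at[OF \<sigma>1, of 0] L0
    by (auto simp: path_def)
  have hol: "agree_at (g1 0) (u 1) (u 0)"
    using trivial_holonomy_simply_connected[OF S L] u(1) L0 unfolding trivial_holonomy_def by metis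
  have half1: "parallel_along {0..1} g1 (\<lambda>t. u (t/2))"
    and half2: "parallel_along {0..1} (reversepath g2) (\<lambda>t. u (t/2 + 1/2))"
    using parallel_along_joinpaths[OF u(1)[unfolded L_def] join] by auto
  have rev2: "parallel_along {0..1} g2 (\<lambda>t. u (1 - t/2))"
    using parallel_along_reversepath[OF half2] by (simp add: field_simps)
  have "agree_at (g1 1) (u (1/2)) (\<sigma>1 1)"
    using parallel_along_unique[OF connected_Icc _ half1 \<sigma>1, of 0 1] g1(1) u(2) by (simp add: path_def)
  moreover have "agree_at (g2 0) (u 1) (\<sigma>2 0)"
    using agree_at_trans[OF hol agree_at_trans[OF u(2) start[unfolded pathstart_def]]] ends'(1) by simp
  then have "agree_at (g1 1) (u (1/2)) (\<sigma>2 1)"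
    using parallel_along_unique[OF connected_Icc _ rev2 \<sigma>2, of 0 1] g2(1) ends'(2) by (simp add: path_def)
  ultimately show ?thesis unfolding pathfinish_def by (meson agree_at_sym agree_at_trans)
qed

subsection \<open>Parallel 1-forms and the frequency map\<close>

lemma parallel_form_along_path:
  assumes \<omega>: "parallel_form A S \<omega>" and g: "path g" "path_image g \<subseteq> S"
  shows "parallel_along {0..1} g (\<lambda>t k. \<omega> k (g t))"
  unfolding parallel_along_def
proof (intro conjI ballI impI)
  fix t :: real assume t: "t \<in> {0..1}"
  then have "g t \<in> S" using g unfolding path_image_def by blast
  then show "covector_at (g t) (\<lambda>k. \<omega> k (g t))"
    using \<omega> unfolding covector_at_def parallel_form_def transition_deriv_def by blast
next
  fix k t assume k: "k \<in> A" and t: "t \<in> {0..1::real}" and gk: "g t \<in> fst k"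
  have gS: "g t \<in> S" using g t unfolding path_image_def by blast
  obtain W where W: "open W" "g t \<in> W" "\<forall>q\<in>W \<inter> S \<inter> fst k. \<omega> k q = \<omega> k (g t)"
    using \<omega> k gS gk unfolding parallel_form_def by blast
  obtain e where e: "e > 0" "\<forall>y\<in>{0..1}. dist y t < e \<longrightarrow> g y \<in> W \<inter> fst k"
    using continuous_on_imp_dist_in_open[OF g(1)[unfolded path_def] t
        open_Int[OF W(1) open_chart_domain[OF k]]]
      W(2) gk by blast
  have "\<omega> k (g z) = \<omega> k (g t)" if "z \<in> {0..1}" "dist z t < e" for z
  proof -
    have "g z \<in> S" using g that(1) unfolding path_image_def by blast
    then show ?thesis using e that W(3) by blast
  qed
  then show "\<exists>e>0. \<forall>z\<in>{0..1}. dist z t < e \<longrightarrow> \<omega> k (g z) = \<omega> k (g t)" using e(1) by blast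
qed

lemma parallel_form_unique:
  assumes S: "path_connected S" and c: "c \<in> S"
    and \<omega>1: "parallel_form A S \<omega>1" and \<omega>2: "parallel_form A S \<omega>2"
    and agree: "agree_at c (\<lambda>k. \<omega>1 k c) (\<lambda>k. \<omega>2 k c)"
  shows "\<omega>1 = \<omega>2"
proof (intro ext)
  fix k p
  show "\<omega>1 k p = \<omega>2 k p"
  proof (cases "k \<in> A \<and> p \<in> S \<inter> fst k")
    case False
    then show ?thesis using \<omega>1 \<omega>2 unfolding parallel_form_def by metis
  next
    case True
    then obtain g where g: "path g" "path_image g \<subseteq> S" "pathstart g = c" "pathfinish g = p"
      using S c unfolding path_connected_def by blast
    have "agree_at (g 1) (\<lambda>k. \<omega>1 k (g 1)) (\<lambda>k. \<omega>2 k (g 1))"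
      using parallel_along_unique[OF connected_Icc _ parallel_form_along_path[OF \<omega>1 g(1,2)]
          parallel_form_along_path[OF \<omega>2 g(1,2)], of 0 1] g agree
      by (simp add: path_def pathstart_def)
    then show ?thesis using True g(4) unfolding agree_at_def pathfinish_def by blast
  qed
qed

lemma parallel_form_constant_on_connected:
  assumes \<omega>: "parallel_form A S \<omega>" and k: "k \<in> A"
    and W: "connected W" "W \<subseteq> S \<inter> fst k" and pq: "p \<in> W" "q \<in> W"
  shows "\<omega> k p = \<omega> k q"
proof (rule locally_constant_on_connected[OF W(1) pq, where g = "\<lambda>x. \<omega> k x"])
  fix a assume "a \<in> W"
  then have "a \<in> S" "a \<in> fst k" using W(2) by blast+
  then obtain U where "open U" "a \<in> U" "\<forall>x\<in>U \<inter> S \<inter> fst k. \<omega> k x = \<omega> k a"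
    using parallel_form_locally_constant[OF \<omega> k] by blast
  then show "\<exists>U. open U \<and> a \<in> U \<and> (\<forall>x\<in>U \<inter> W. \<omega> k x = \<omega> k a)" using W(2) by blast
qed

lemma parallel_vf_constant_on_connected:
  assumes X: "parallel_vf A S X" and k: "k \<in> A"
    and W: "connected W" "W \<subseteq> S \<inter> fst k" and pq: "p \<in> W" "q \<in> W"
  shows "X k p = X k q"
proof (rule locally_constant_on_connected[OF W(1) pq, where g = "\<lambda>x. X k x"])
  fix a assume "a \<in> W"
  then have "a \<in> S" "a \<in> fst k" using W(2) by blast+
  then obtain U where "open U" "a \<in> U" "\<forall>x\<in>U \<inter> S \<inter> fst k. X k x = X k a"
    using parallel_vf_locally_constant[OF X k] by blast
  then show "\<exists>U. open U \<and> a \<in> U \<and> (\<forall>x\<in>U \<inter> W. X k x = X k a)" using W(2) by blast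
qed

lemma parallel_form_vf_chart_change:
  assumes \<omega>: "parallel_form A S \<omega>" and X: "parallel_vf A S X"
    and k: "k \<in> A" "k' \<in> A" and q: "q \<in> S" "q \<in> fst k" "q \<in> fst k'"
  shows "\<omega> k' q \<bullet> X k' q = \<omega> k q \<bullet> X k q"
  using parallel_form_compatible[OF \<omega> k(2,1) q(1,3,2)] parallel_vf_compatible[OF X k(2,1) q(1,3,2)]
  by simp

lemma form_vf_zero_on_connected_chart_domain:
  assumes \<omega>: "parallel_form A W \<omega>" and X: "parallel_vf A W X"
    and W: "connected W" "W \<subseteq> fst k" and k: "k \<in> A" and c: "c \<in> W" "\<omega> k c \<bullet> X k c = 0"
  shows "form_vf_zero A W \<omega> X"
  unfolding form_vf_zero_def
proof (intro ballI)
  fix k' q assume k': "k' \<in> A" and q: "q \<in> W \<inter> fst k'"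
  have W': "W \<subseteq> W \<inter> fst k" using W(2) by blast
  have "\<omega> k' q \<bullet> X k' q = \<omega> k q \<bullet> X k q"
    using parallel_form_vf_chart_change[OF \<omega> X k k'] q W(2) by blast
  also have "\<dots> = \<omega> k c \<bullet> X k c"
    using parallel_form_constant_on_connected[OF \<omega> k W(1) W' _ c(1)]
      parallel_vf_constant_on_connected[OF X k W(1) W' _ c(1)] q by simp
  finally show "\<omega> k' q \<bullet> X k' q = 0" using c(2) by simp
qed

definition transport :: "'a set \<Rightarrow> 'a \<Rightarrow> (('a, 'n) chart \<Rightarrow> real^'n) \<Rightarrow> 'a \<Rightarrow> ('a, 'n) chart \<Rightarrow> real^'n"
  where "transport S c v p = (SOME w. \<exists>g \<sigma>. path g \<and> path_image g \<subseteq> S \<and>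
      pathstart g = c \<and> pathfinish g = p \<and> parallel_along {0..1} g \<sigma> \<and> agree_at c (\<sigma> 0) v \<and> w = \<sigma> 1)"

lemma transport_agree:
  assumes S: "simply_connected S"
    and g: "path g" "path_image g \<subseteq> S" "pathstart g = c" "pathfinish g = p"
    and \<sigma>: "parallel_along {0..1} g \<sigma>" "agree_at c (\<sigma> 0) v"
  shows "agree_at p (\<sigma> 1) (transport S c v p)"
proof -
  define P where "P w \<longleftrightarrow> (\<exists>g \<sigma>. path g \<and> path_image g \<subseteq> S \<and> pathstart g = c \<and> pathfinish g = p \<and>
      parallel_along {0..1} g \<sigma> \<and> agree_at c (\<sigma> 0) v \<and> w = \<sigma> 1)" for w
  have "P (\<sigma> 1)" unfolding P_def by (rule exI[of _ g], rule exI[of _ \<sigma>]) (use g \<sigma> in simp)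
  then have "P (transport S c v p)" unfolding transport_def P_def[symmetric] by (rule someI[of P])
  then obtain g' \<sigma>' where g': "path g'" "path_image g' \<subseteq> S" "pathstart g' = c" "pathfinish g' = p"
    and \<sigma>': "parallel_along {0..1} g' \<sigma>'" "agree_at c (\<sigma>' 0) v" "transport S c v p = \<sigma>' 1"
    unfolding P_def by (elim exE conjE)
  have "agree_at c (\<sigma> 0) (\<sigma>' 0)" using \<sigma>(2) \<sigma>'(2) agree_at_sym agree_at_trans by blast
  then show ?thesis
    using parallel_along_path_independent[OF S g(1,2) g'(1,2) _ _ \<sigma>(1) \<sigma>'(1)] g g' \<sigma>'(3) by simp
qed

lemma transport_exists:
  assumes S: "simply_connected S" and c: "c \<in> S" and p: "p \<in> S" and v: "covector_at c v"
  obtains g \<sigma> where "path g" "path_image g \<subseteq> S" "pathstart g = c" "pathfinish g = p"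
    "parallel_along {0..1} g \<sigma>" "agree_at c (\<sigma> 0) v"
proof -
  obtain g where g: "path g" "path_image g \<subseteq> S" "pathstart g = c" "pathfinish g = p"
    using simply_connected_imp_path_component[OF S c p] unfolding path_component_def by blast
  moreover obtain \<sigma> where "parallel_along {0..1} g \<sigma>" "agree_at (g 0) (\<sigma> 0) v"
    using parallel_along_exists[of g v] g v by (auto simp: path_def pathstart_def)
  ultimately show ?thesis using that by (simp add: pathstart_def)
qed

lemma covector_at_transport:
  assumes S: "simply_connected S" and c: "c \<in> S" and p: "p \<in> S" and v: "covector_at c v"
  shows "covector_at p (transport S c v p)"
proof -
  obtain g \<sigma> where g: "path g" "path_image g \<subseteq> S" "pathstart g = c" "pathfinish g = p"
    and \<sigma>: "parallel_along {0..1} g \<sigma>" "agree_at c (\<sigma> 0) v"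
    by (rule transport_exists[OF S c p v])
  have "covector_at (g 1) (\<sigma> 1)" by (rule parallel_along_covector_at[OF \<sigma>(1)]) simp
  then have "covector_at p (\<sigma> 1)" using g(4) by (simp add: pathfinish_def)
  then show ?thesis using covector_at_agree transport_agree[OF S g \<sigma>] by blast
qed

lemma transport_locally_constant:
  assumes S: "open S" "simply_connected S" and c: "c \<in> S" and v: "covector_at c v"
    and k: "k \<in> A" and p: "p \<in> S" "p \<in> fst k"
  shows "\<exists>W. open W \<and> p \<in> W \<and> (\<forall>q\<in>W \<inter> S \<inter> fst k. transport S c v q k = transport S c v p k)"
proof -
  obtain W where W: "open W" "p \<in> W" "W \<subseteq> S \<inter> fst k" "path_connected W"
    using chart_neighbourhood[OF k S(1) p] by metis
  obtain g \<sigma> where g: "path g" "path_image g \<subseteq> S" "pathstart g = c" "pathfinish g = p"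
    and \<sigma>: "parallel_along {0..1} g \<sigma>" "agree_at c (\<sigma> 0) v"
    by (rule transport_exists[OF S(2) c p(1) v])
  have "transport S c v q k = transport S c v p k" if q: "q \<in> W" for q
  proof -
    obtain \<gamma> where \<gamma>: "path \<gamma>" "path_image \<gamma> \<subseteq> W" "pathstart \<gamma> = p" "pathfinish \<gamma> = q"
      using W(2,4) q unfolding path_connected_def by blast
    have join: "pathfinish g = pathstart \<gamma>" using g \<gamma> by simp
    have g\<gamma>: "path (g +++ \<gamma>)" "path_image (g +++ \<gamma>) \<subseteq> S"
      "pathstart (g +++ \<gamma>) = c" "pathfinish (g +++ \<gamma>) = q"
      using g \<gamma> W(3) path_image_join[OF join] join by auto
    obtain u where u: "parallel_along {0..1} (g +++ \<gamma>) u" "agree_at c (u 0) v"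
      using parallel_along_exists[of "g +++ \<gamma>" v] g\<gamma> v by (auto simp: path_def pathstart_def)
    have "agree_at p (u (1/2)) (transport S c v p)"
      using transport_agree[OF S(2) g parallel_along_joinpaths(1)[OF u(1) join]] u(2) by simp
    moreover have "agree_at q (u 1) (transport S c v q)" by (rule transport_agree[OF S(2) g\<gamma> u])
    moreover have "u 1 k = u (1/2) k"
      using parallel_along_chart_constant[OF connected_Icc _ parallel_along_joinpaths(2)[OF u(1) join] k,
          of 0 1]
        \<gamma>(1,2) W(3) by (auto simp: path_def path_image_def)
    ultimately show ?thesis using k p(2) q W(3) unfolding agree_at_def by auto
  qed
  then show ?thesis using W(1,2) by blast
qed

lemma transport_start:
  assumes S: "simply_connected S" and c: "c \<in> S" and v: "covector_at c v"
  shows "agree_at c v (transport S c v c)"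
proof -
  have "parallel_along {0..1} (\<lambda>_. c) (\<lambda>_. v)"
    unfolding parallel_along_def using v by (auto intro: exI[of _ 1])
  then show ?thesis
    using transport_agree[OF S, of "\<lambda>_. c" c c "\<lambda>_. v" v] c
    by (simp add: path_def path_image_def pathstart_def pathfinish_def agree_at_refl image_subset_iff)
qed

lemma parallel_form_transport:
  assumes S: "open S" "simply_connected S" and c: "c \<in> S" and v: "covector_at c v"
  shows "parallel_form A S (\<lambda>k p. if k \<in> A \<and> p \<in> S \<inter> fst k then transport S c v p k else 0)"
    (is "parallel_form A S ?\<omega>")
  unfolding parallel_form_def
proof (intro conjI ballI allI impI)
  fix k p assume "k \<notin> A \<or> p \<notin> S \<inter> fst k"
  then show "?\<omega> k p = 0" by auto
next
  fix k p assume k: "k \<in> A" and p: "p \<in> S \<inter> fst k"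
  then obtain W where W: "open W" "p \<in> W"
    "\<forall>q\<in>W \<inter> S \<inter> fst k. transport S c v q k = transport S c v p k"
    using transport_locally_constant[OF S c v k] by blast
  have "?\<omega> k q = ?\<omega> k p" if q: "q \<in> W \<inter> S \<inter> fst k" for q
  proof -
    have "?\<omega> k q = transport S c v q k" using k q by simp
    also have "\<dots> = transport S c v p k" using W(3) q by blast
    also have "\<dots> = ?\<omega> k p" using k p by simp
    finally show ?thesis .
  qed
  then show "\<exists>W. open W \<and> p \<in> W \<and> (\<forall>q\<in>W \<inter> S \<inter> fst k. ?\<omega> k q = ?\<omega> k p)"
    using W(1,2) by blast
next
  fix k k' p v' assume k: "k \<in> A" "k' \<in> A" and p: "p \<in> S \<inter> fst k \<inter> fst k'"
  have "covector_at p (transport S c v p)" using covector_at_transport[OF S(2) c _ v] p by blast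
  then have "transport S c v p k \<bullet> v' = transport S c v p k' \<bullet> transition_deriv k k' p v'"
    using k p unfolding covector_at_def by blast
  then show "?\<omega> k p \<bullet> v' = ?\<omega> k' p \<bullet> frechet_derivative (transition k k') (at (snd k p)) v'"
    using k p unfolding transition_deriv_def by simp
qed

lemma parallel_form_exists:
  assumes S: "open S" "simply_connected S" and c: "c \<in> S" and v: "covector_at c v"
  shows "\<exists>\<omega>. parallel_form A S \<omega> \<and> agree_at c (\<lambda>k. \<omega> k c) v"
proof -
  let ?\<omega> = "\<lambda>k p. if k \<in> A \<and> p \<in> S \<inter> fst k then transport S c v p k else 0"
  have "agree_at c (\<lambda>k. ?\<omega> k c) v"
    using transport_start[OF S(2) c v] c unfolding agree_at_def by simp
  then show ?thesis using parallel_form_transport[OF S c v] by blast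
qed

lemma freq_map_spec:
  assumes F: "smooth_fun A F" and S: "open S" "simply_connected S" and c: "c \<in> S"
  shows "parallel_form A S (freq_map A F S c) \<and>
    (\<forall>k\<in>A. c \<in> fst k \<longrightarrow> (\<forall>v. freq_map A F S c k c \<bullet> v = dF F k c v))"
proof -
  obtain d where d: "covector_at c d" "\<forall>k\<in>A. c \<in> fst k \<longrightarrow> (\<forall>v. d k \<bullet> v = dF F k c v)"
    using dF_covector[OF F] by blast
  have value_iff: "(\<forall>k\<in>A. c \<in> fst k \<longrightarrow> (\<forall>v. \<omega> k c \<bullet> v = dF F k c v)) \<longleftrightarrow> agree_at c (\<lambda>k. \<omega> k c) d"
    for \<omega> :: "('a, 'n) chart \<Rightarrow> 'a \<Rightarrow> real^'n"
    using d(2) vector_eq_rdot unfolding agree_at_def by metis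
  have "path_connected S"
    using simply_connected_imp_path_component[OF S(2)] unfolding path_connected_def path_component_def
    by blast
  then have "\<exists>!\<omega>. parallel_form A S \<omega> \<and> (\<forall>k\<in>A. c \<in> fst k \<longrightarrow> (\<forall>v. \<omega> k c \<bullet> v = dF F k c v))"
    unfolding value_iff
    using parallel_form_exists[OF S c d(1)] parallel_form_unique[OF _ c] agree_at_sym agree_at_trans
    by metis
  then show ?thesis unfolding freq_map_def by (rule theI')
qed

subsection \<open>The Ruessmann condition and resonant sets\<close>

lemma Omega_X_eq_freq_map:
  assumes "smooth_fun A F" "open S" "simply_connected S" "c \<in> S" "k \<in> A" "c \<in> fst k"
  shows "Omega_X F X k c = freq_map A F S c k c \<bullet> X k c"
  using freq_map_spec[OF assms(1-4)] assms(5,6) unfolding Omega_X_def by simp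

lemma resonant_empty_interior_imp_russmann:
  assumes F: "smooth_fun A F" and R: "resonant_empty_interior A F"
  shows "russmann A F"
  unfolding russmann_def
proof (intro allI impI notI)
  fix S X assume H: "open S \<and> simply_connected S \<and> parallel_vf A S X \<and> nonvanishing_vf A S X"
  assume "\<exists>U. open U \<and> U \<noteq> {} \<and> U \<subseteq> S \<and> (\<forall>c\<in>U. form_vf_zero A S (freq_map A F S c) X)"
  then obtain U where U: "open U" "U \<noteq> {}" "U \<subseteq> S" "\<forall>c\<in>U. form_vf_zero A S (freq_map A F S c) X"
    by blast
  have "U \<subseteq> Sigma_X A F S X"
  proof
    fix c assume c: "c \<in> U"
    then have "c \<in> S" using U(3) by blast
    moreover have "Omega_X F X k c = 0" if k: "k \<in> A" "c \<in> fst k" for k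
      using Omega_X_eq_freq_map[OF F _ _ \<open>c \<in> S\<close> k] U(4) c k H \<open>c \<in> S\<close>
      unfolding form_vf_zero_def by simp
    ultimately show "c \<in> Sigma_X A F S X" unfolding Sigma_X_def by blast
  qed
  then have "U \<subseteq> interior (Sigma_X A F S X)" using U(1) interior_maximal by blast
  moreover have "interior (Sigma_X A F S X) = {}"
    using R H unfolding resonant_empty_interior_def by blast
  ultimately show False using U(2) by blast
qed

lemma russmann_imp_resonant_empty_interior:
  assumes F: "smooth_fun A F" and R: "russmann A F"
  shows "resonant_empty_interior A F"
  unfolding resonant_empty_interior_def
proof (intro allI impI)
  fix S X assume H: "open S \<and> parallel_vf A S X \<and> nonvanishing_vf A S X"
  show "interior (Sigma_X A F S X) = {}"
  proof (rule ccontr)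
    assume "interior (Sigma_X A F S X) \<noteq> {}"
    then obtain p where p: "p \<in> interior (Sigma_X A F S X)" by blast
    obtain k where k: "k \<in> A" "p \<in> fst k" using chart_cover by blast
    obtain W where W: "open W" "p \<in> W" "W \<subseteq> interior (Sigma_X A F S X) \<inter> fst k"
      "simply_connected W" "path_connected W"
      by (rule chart_neighbourhood[OF k(1) open_interior p k(2)])
    have WS: "W \<subseteq> Sigma_X A F S X" "W \<subseteq> S"
      using W(3) interior_subset unfolding Sigma_X_def by blast+
    have X: "parallel_vf A W X" "nonvanishing_vf A W X"
      using H parallel_vf_subset nonvanishing_vf_subset WS(2) by blast+
    have "form_vf_zero A W (freq_map A F W c) X" if c: "c \<in> W" for c
    proof (rule form_vf_zero_on_connected_chart_domain[OF _ X(1)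
          path_connected_imp_connected[OF W(5)] _ k(1) c])
      show "parallel_form A W (freq_map A F W c)" using freq_map_spec[OF F W(1,4) c] by blast
      show "W \<subseteq> fst k" using W(3) by blast
      have ck: "c \<in> fst k" and "c \<in> Sigma_X A F S X" using c W(3) WS(1) by blast+
      then have "Omega_X F X k c = 0" using k(1) unfolding Sigma_X_def by blast
      then show "freq_map A F W c k c \<bullet> X k c = 0"
        using Omega_X_eq_freq_map[OF F W(1,4) c k(1) ck, of X] by simp
    qed
    then show False using R W(1,2,4) X unfolding russmann_def by blast
  qed
qed

end

theorem mainTheorem6:
  fixes A :: "('a::{t2_space, second_countable_topology}, 'n::finite) chart set"
    and F :: "'a \<Rightarrow> real"
  assumes "affine_atlas A"
    and "smooth_fun A F"
  shows "russmann A F \<longleftrightarrow> resonant_empty_interior A F"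
proof -
  interpret affine_manifold A by (rule affine_manifold.intro) (rule assms(1))
  show ?thesis
    using russmann_imp_resonant_empty_interior resonant_empty_interior_imp_russmann assms(2) by blast
qed

end
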